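(* Let $\mathcal{A}=(\mathcal{E},\{M_i\}_{i\in\mathcal{O}})$ be a quantum decision model and $1\ge\epsilon,\delta>0$, and let $K^*$ be its Lipschitz constant. (1) $\mathcal{A}$ is $(\epsilon,\delta)$-fair if and only if $\delta\ge K^*\epsilon$. (2) Suppose $\mathcal{A}$ is not $(\epsilon,\delta)$-fair, and let $|\psi\rangle,|\phi\rangle$ be mutually orthogonal unit vectors with $d(\mathcal{A}(\psi),\mathcal{A}(\phi))=K^*D(\psi,\phi)$ (where $\psi=|\psi\rangle\langle\psi|$, $\phi=|\phi\rangle\langle\phi|$; such a pair exists). Then for every $\sigma\in\mathcal{D}(\mathcal{H})$, the pair $(\rho_\psi,\rho_\phi)$ with $\rho_\psi=\epsilon\psi+(1-\epsilon)\sigma$ and $\rho_\phi=\epsilon\phi+(1-\epsilon)\sigma$ is an $(\epsilon,\delta)$-bias pair.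
   Context: $\mathcal{H}$ is a Hilbert space of finite dimension $N$ and $\mathcal{D}(\mathcal{H})$ is the set of density matrices on $\mathcal{H}$. A super-operator $\mathcal{E}$ is a completely positive trace-preserving map $\mathcal{E}(\rho)=\sum_j E_j\rho E_j^\dagger$, $\sum_j E_j^\dagger E_j=I$. A quantum measurement is $\{M_i\}_{i\in\mathcal{O}}$ with $\mathcal{O}$ finite and $\sum_i M_i^\dagger M_i=I$. A quantum decision model $\mathcal{A}=(\mathcal{E},\{M_i\}_{i\in\mathcal{O}})$ maps $\rho\in\mathcal{D}(\mathcal{H})$ to the distribution $\mathcal{A}(\rho)=\{\mathrm{tr}(M_i\mathcal{E}(\rho)M_i^\dagger)\}_{i\in\mathcal{O}}$. $D(\rho,\sigma)=\frac12\mathrm{tr}|\rho-\sigma|$ (trace distance); $d(p,q)=\frac12\sum_i|p_i-q_i|$ (total variation distance). A pair $(\rho,\sigma)$ of states is an $(\epsilon,\delta)$-bias pair if $D(\rho,\sigma)\le\epsilon$ and $d(\mathcal{A}(\rho),\mathcal{A}(\sigma))>\delta$; $\mathcal{A}$ is $(\epsilon,\delta)$-fair if no $(\epsilon,\delta)$-bias pair exists. The Lipschitz constant $K^*$ of $\mathcal{A}$ is the smallest $K\ge 0$ such that $d(\mathcal{A}(\rho),\mathcal{A}(\sigma))\le K\,D(\rho,\sigma)$ for all $\rho,\sigma\in\mathcal{D}(\mathcal{H})$. *)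

theory Defs
  imports "Jordan_Normal_Form.Matrix"
begin

(* Finite-dimensional Hilbert space H = C^N; operators are N x N complex matrices. *)

definition adj :: "complex mat \<Rightarrow> complex mat" where
  "adj A = mat (dim_col A) (dim_row A) (\<lambda>(i,j). cnj (A $$ (j,i)))"

definition mtrace :: "complex mat \<Rightarrow> complex" where
  "mtrace A = (\<Sum>i<dim_row A. A $$ (i,i))"

definition msum :: "nat \<Rightarrow> 'j set \<Rightarrow> ('j \<Rightarrow> complex mat) \<Rightarrow> complex mat" where
  "msum N J f = mat N N (\<lambda>(i,j). \<Sum>k\<in>J. f k $$ (i,j))"

definition inner :: "complex vec \<Rightarrow> complex vec \<Rightarrow> complex" where
  "inner u v = (\<Sum>i<dim_vec u. cnj (u $ i) * v $ i)"

definition hermitian :: "complex mat \<Rightarrow> bool" where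
  "hermitian A \<longleftrightarrow> adj A = A"

definition psd :: "nat \<Rightarrow> complex mat \<Rightarrow> bool" where
  "psd N A \<longleftrightarrow> A \<in> carrier_mat N N \<and> hermitian A \<and>
     (\<forall>v \<in> carrier_vec N. 0 \<le> Re (inner v (A *\<^sub>v v)))"

definition density :: "nat \<Rightarrow> complex mat \<Rightarrow> bool" where
  "density N \<rho> \<longleftrightarrow> psd N \<rho> \<and> mtrace \<rho> = 1"

definition mat_abs :: "nat \<Rightarrow> complex mat \<Rightarrow> complex mat" where
  "mat_abs N A = (THE B. psd N B \<and> B * B = adj A * A)"

definition trace_dist :: "nat \<Rightarrow> complex mat \<Rightarrow> complex mat \<Rightarrow> real" where
  "trace_dist N \<rho> \<sigma> = Re (mtrace (mat_abs N (\<rho> - \<sigma>))) / 2"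

definition tv_dist :: "'o set \<Rightarrow> ('o \<Rightarrow> real) \<Rightarrow> ('o \<Rightarrow> real) \<Rightarrow> real" where
  "tv_dist Out p q = (\<Sum>i\<in>Out. \<bar>p i - q i\<bar>) / 2"

(* Quantum decision model A = (E, {M_i}_{i in Out}); E given by Kraus operators E_j, j in J *)
definition qdm :: "nat \<Rightarrow> 'j set \<Rightarrow> ('j \<Rightarrow> complex mat) \<Rightarrow> 'o set \<Rightarrow> ('o \<Rightarrow> complex mat) \<Rightarrow> bool" where
  "qdm N J E Out M \<longleftrightarrow>
     finite J \<and> (\<forall>j\<in>J. E j \<in> carrier_mat N N) \<and> msum N J (\<lambda>j. adj (E j) * E j) = 1\<^sub>m N \<and>
     finite Out \<and> (\<forall>i\<in>Out. M i \<in> carrier_mat N N) \<and> msum N Out (\<lambda>i. adj (M i) * M i) = 1\<^sub>m N"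

definition superop :: "nat \<Rightarrow> 'j set \<Rightarrow> ('j \<Rightarrow> complex mat) \<Rightarrow> complex mat \<Rightarrow> complex mat" where
  "superop N J E \<rho> = msum N J (\<lambda>j. E j * \<rho> * adj (E j))"

definition qdm_out :: "nat \<Rightarrow> 'j set \<Rightarrow> ('j \<Rightarrow> complex mat) \<Rightarrow> ('o \<Rightarrow> complex mat) \<Rightarrow> complex mat \<Rightarrow> 'o \<Rightarrow> real" where
  "qdm_out N J E M \<rho> i = Re (mtrace (M i * superop N J E \<rho> * adj (M i)))"

definition bias_pair :: "nat \<Rightarrow> 'j set \<Rightarrow> ('j \<Rightarrow> complex mat) \<Rightarrow> 'o set \<Rightarrow> ('o \<Rightarrow> complex mat)
    \<Rightarrow> real \<Rightarrow> real \<Rightarrow> complex mat \<Rightarrow> complex mat \<Rightarrow> bool" where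
  "bias_pair N J E Out M \<epsilon> \<delta> \<rho> \<sigma> \<longleftrightarrow> density N \<rho> \<and> density N \<sigma> \<and>
     trace_dist N \<rho> \<sigma> \<le> \<epsilon> \<and> tv_dist Out (qdm_out N J E M \<rho>) (qdm_out N J E M \<sigma>) > \<delta>"

definition fair :: "nat \<Rightarrow> 'j set \<Rightarrow> ('j \<Rightarrow> complex mat) \<Rightarrow> 'o set \<Rightarrow> ('o \<Rightarrow> complex mat)
    \<Rightarrow> real \<Rightarrow> real \<Rightarrow> bool" where
  "fair N J E Out M \<epsilon> \<delta> \<longleftrightarrow> \<not> (\<exists>\<rho> \<sigma>. bias_pair N J E Out M \<epsilon> \<delta> \<rho> \<sigma>)"

definition lipschitz_const :: "nat \<Rightarrow> 'j set \<Rightarrow> ('j \<Rightarrow> complex mat) \<Rightarrow> 'o set \<Rightarrow> ('o \<Rightarrow> complex mat) \<Rightarrow> real" where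
  "lipschitz_const N J E Out M = (LEAST K. K \<ge> 0 \<and> (\<forall>\<rho> \<sigma>. density N \<rho> \<longrightarrow> density N \<sigma> \<longrightarrow>
      tv_dist Out (qdm_out N J E M \<rho>) (qdm_out N J E M \<sigma>) \<le> K * trace_dist N \<rho> \<sigma>))"

definition proj :: "complex vec \<Rightarrow> complex mat" where
  "proj v = mat (dim_vec v) (dim_vec v) (\<lambda>(i,j). v $ i * cnj (v $ j))"

definition is_unit_vec :: "nat \<Rightarrow> complex vec \<Rightarrow> bool" where
  "is_unit_vec N v \<longleftrightarrow> v \<in> carrier_vec N \<and> inner v v = 1"

end

theory Submission
  imports Defs "Jordan_Normal_Form.Spectral_Radius"
begin

text \<open>For a set \<open>S\<close> of outcomes let \<open>Q\<^sub>S\<close> be the sum over \<open>i \<in> S\<close> and all \<open>j\<close> of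
  \<open>(M\<^sub>i E\<^sub>j)\<^sup>\<dagger> M\<^sub>i E\<^sub>j\<close>, so that \<open>S\<close> has probability \<open>tr (Q\<^sub>S \<rho>)\<close> in state \<open>\<rho>\<close>, and the total variation
  distance of two outcome distributions is the largest value of \<open>tr (Q\<^sub>S (\<rho> - \<sigma>))\<close>. Diagonalising the
  traceless hermitian matrix \<open>\<rho> - \<sigma> = \<Sum>\<^sub>k \<lambda>\<^sub>k |u\<^sub>k\<rangle>\<langle>u\<^sub>k|\<close>, for which \<open>2 D(\<rho>, \<sigma>) = \<Sum>\<^sub>k |\<lambda>\<^sub>k|\<close>, gives
  \<open>tr (Q\<^sub>S (\<rho> - \<sigma>)) \<le> D(\<rho>, \<sigma>) w(Q\<^sub>S)\<close>, where \<open>w(Q)\<close> is the width (largest minus smallest eigenvalue)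
  of the numerical range of \<open>Q\<close>. Hence the Lipschitz constant is \<open>K\<^sup>* = max\<^sub>S w(Q\<^sub>S)\<close>, attained by the
  orthogonal pure states given by extreme eigenvectors of an optimal \<open>Q\<^sub>S\<close>. Mixing both with any \<open>\<sigma>\<close>
  in proportion \<open>\<epsilon>\<close> scales both distances by \<open>\<epsilon>\<close>, which gives a bias pair exactly when \<open>\<delta> < K\<^sup>* \<epsilon>\<close>.
  Below dimension 2 all states coincide and \<open>K\<^sup>* = 0\<close>. The spectral theorem itself is proved from the
  existence of eigenvalues, by compressing to orthogonal complements of eigenvectors.\<close>

section \<open>Matrices, adjoints and inner products\<close>

lemma index_mult_mat_vec_sum: "A \<in> carrier_mat N N \<Longrightarrow> v \<in> carrier_vec N \<Longrightarrow> i < N \<Longrightarrow>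
  (A *\<^sub>v v) $ i = (\<Sum>j<N. A $$ (i,j) * v $ j)"
  by (auto simp: index_mult_mat_vec scalar_prod_def atLeast0LessThan intro!: sum.cong)

lemma index_mult_mat_sum: "A \<in> carrier_mat N N \<Longrightarrow> B \<in> carrier_mat N N \<Longrightarrow> i < N \<Longrightarrow> j < N \<Longrightarrow>
  (A * B) $$ (i,j) = (\<Sum>k<N. A $$ (i,k) * B $$ (k,j))"
  by (auto simp: index_mult_mat scalar_prod_def atLeast0LessThan intro!: sum.cong)

declare index_mult_mat_vec[simp del] index_mult_mat(1)[simp del] minus_carrier_mat[simp]

lemma adj_carrier[simp]: "A \<in> carrier_mat n m \<Longrightarrow> adj A \<in> carrier_mat m n"
  by (auto simp: adj_def)

lemma adj_dims[simp]: "dim_row (adj A) = dim_col A" "dim_col (adj A) = dim_row A"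
  by (auto simp: adj_def)

lemma index_adj[simp]: "i < dim_col A \<Longrightarrow> j < dim_row A \<Longrightarrow> adj A $$ (i,j) = cnj (A $$ (j,i))"
  by (auto simp: adj_def)

lemma inner_eq_sum: "u \<in> carrier_vec N \<Longrightarrow> inner u v = (\<Sum>i<N. cnj (u $ i) * v $ i)"
  by (auto simp: inner_def)

lemma mtrace_eq_sum: "A \<in> carrier_mat N N \<Longrightarrow> mtrace A = (\<Sum>i<N. A $$ (i,i))"
  by (auto simp: mtrace_def)

lemma msum_carrier[simp]: "msum N J f \<in> carrier_mat N N"
  by (auto simp: msum_def)

lemma index_msum[simp]: "i < N \<Longrightarrow> j < N \<Longrightarrow> msum N J f $$ (i,j) = (\<Sum>k\<in>J. f k $$ (i,j))"
  by (auto simp: msum_def)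

lemma hermitian_iff: "A \<in> carrier_mat N N \<Longrightarrow> hermitian A \<longleftrightarrow> (\<forall>i<N. \<forall>j<N. cnj (A $$ (j,i)) = A $$ (i,j))"
  unfolding hermitian_def
  by (auto simp: eq_matI) (metis index_adj carrier_matD(1) carrier_matD(2))+

lemma hermitian_adj: "hermitian A \<Longrightarrow> adj A = A"
  by (simp add: hermitian_def)

lemma adj_adj: "adj (adj A) = A"
  by (auto simp: adj_def intro!: eq_matI)

lemma adj_mult: "A \<in> carrier_mat n m \<Longrightarrow> B \<in> carrier_mat m p \<Longrightarrow> adj (A * B) = adj B * adj A"
  apply (rule eq_matI)
    apply (auto simp: adj_def index_mult_mat scalar_prod_def)
  by (simp add: mult.commute)

lemma inner_adj:
  assumes "A \<in> carrier_mat N N" "u \<in> carrier_vec N" "v \<in> carrier_vec N"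
  shows "inner u (A *\<^sub>v v) = inner (adj A *\<^sub>v u) v"
proof -
  have "inner u (A *\<^sub>v v) = (\<Sum>i<N. \<Sum>j<N. cnj (u $ i) * A $$ (i,j) * v $ j)"
    using assms by (simp add: inner_eq_sum index_mult_mat_vec_sum sum_distrib_left mult.assoc)
  also have "\<dots> = (\<Sum>j<N. \<Sum>i<N. cnj (u $ i) * A $$ (i,j) * v $ j)" by (rule sum.swap)
  also have "\<dots> = (\<Sum>j<N. cnj ((adj A *\<^sub>v u) $ j) * v $ j)"
  proof (rule sum.cong[OF refl])
    fix j assume j: "j \<in> {..<N}"
    have c: "adj A \<in> carrier_mat N N" using assms by simp
    have "(adj A *\<^sub>v u) $ j = (\<Sum>i<N. cnj (A $$ (i,j)) * u $ i)"
      using index_mult_mat_vec_sum[OF c assms(2)] j assms(1) by auto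
    then show "(\<Sum>i<N. cnj (u $ i) * A $$ (i, j) * v $ j) = cnj ((adj A *\<^sub>v u) $ j) * v $ j"
      by (simp add: sum_distrib_left sum_distrib_right cnj_sum mult.commute mult.left_commute)
  qed
  also have "\<dots> = inner (adj A *\<^sub>v u) v"
  proof -
    have "adj A *\<^sub>v u \<in> carrier_vec N" using assms by (metis adj_carrier mult_mat_vec_carrier)
    from inner_eq_sum[OF this] show ?thesis by simp
  qed
  finally show ?thesis .
qed

lemma inner_swap: "u \<in> carrier_vec N \<Longrightarrow> v \<in> carrier_vec N \<Longrightarrow> inner v u = cnj (inner u v)"
  by (simp add: inner_eq_sum cnj_sum mult.commute)

lemma inner_lincomb:
  assumes "w \<in> carrier_vec N" "\<And>k. k < n \<Longrightarrow> f k \<in> carrier_vec N"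
  shows "inner w (vec N (\<lambda>i. \<Sum>k<n. a k * f k $ i)) = (\<Sum>k<n. a k * inner w (f k))"
proof -
  have "inner w (vec N (\<lambda>i. \<Sum>k<n. a k * f k $ i)) = (\<Sum>i<N. \<Sum>k<n. cnj (w $ i) * (a k * f k $ i))"
    using assms by (simp add: inner_eq_sum sum_distrib_left)
  also have "\<dots> = (\<Sum>k<n. \<Sum>i<N. cnj (w $ i) * (a k * f k $ i))" by (rule sum.swap)
  also have "\<dots> = (\<Sum>k<n. a k * inner w (f k))"
    using assms by (simp add: inner_eq_sum sum_distrib_left mult.commute mult.left_commute)
  finally show ?thesis .
qed

lemma inner_diff: "w \<in> carrier_vec N \<Longrightarrow> x \<in> carrier_vec N \<Longrightarrow> y \<in> carrier_vec N \<Longrightarrow>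
  inner w (x - y) = inner w x - inner w y"
  by (simp add: inner_eq_sum sum_subtractf right_diff_distrib)

lemma inner_add: "w \<in> carrier_vec N \<Longrightarrow> x \<in> carrier_vec N \<Longrightarrow> y \<in> carrier_vec N \<Longrightarrow>
  inner w (x + y) = inner w x + inner w y"
  by (simp add: inner_eq_sum sum.distrib distrib_left)

lemma inner_smult_right: "w \<in> carrier_vec N \<Longrightarrow> x \<in> carrier_vec N \<Longrightarrow> inner w (s \<cdot>\<^sub>v x) = s * inner w x"
  by (simp add: inner_eq_sum sum_distrib_left mult_ac)

lemma inner_smult_left: "w \<in> carrier_vec N \<Longrightarrow> x \<in> carrier_vec N \<Longrightarrow> inner (s \<cdot>\<^sub>v w) x = cnj s * inner w x"
proof -
  assume a: "w \<in> carrier_vec N" "x \<in> carrier_vec N"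
  then have "s \<cdot>\<^sub>v w \<in> carrier_vec N" by simp
  then show ?thesis using a by (simp add: inner_eq_sum sum_distrib_left mult_ac)
qed

lemma inner_zero_right: "w \<in> carrier_vec N \<Longrightarrow> inner w (0\<^sub>v N) = 0"
  by (simp add: inner_eq_sum)

lemma inner_unit: "w \<in> carrier_vec N \<Longrightarrow> j < N \<Longrightarrow> inner w (unit_vec N j) = cnj (w $ j)"
proof -
  assume w: "w \<in> carrier_vec N" and j: "j < N"
  have "inner w (unit_vec N j) = (\<Sum>i<N. if i = j then cnj (w $ j) else 0)"
    unfolding inner_eq_sum[OF w] by (intro sum.cong refl) (auto simp: unit_vec_def)
  also have "\<dots> = cnj (w $ j)" using j by simp
  finally show ?thesis .
qed

lemma inner_self:
  assumes r: "r \<in> carrier_vec N"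
  shows "inner r r = complex_of_real (\<Sum>i<N. (cmod (r $ i))\<^sup>2)"
proof -
  have "inner r r = (\<Sum>i<N. complex_of_real ((cmod (r $ i))\<^sup>2))"
    unfolding inner_eq_sum[OF r] by (intro sum.cong refl) (simp only: complex_norm_square mult.commute)
  then show ?thesis by (simp only: of_real_sum)
qed

lemma sum_cmod_square_pos:
  assumes r: "r \<in> carrier_vec N" and nz: "r \<noteq> 0\<^sub>v N"
  shows "(\<Sum>i<N. (cmod (r $ i))\<^sup>2) > 0"
proof -
  from nz r obtain i where i: "i < N" and ri: "r $ i \<noteq> 0"
    by (metis carrier_vecD eq_vecI index_zero_vec(1) index_zero_vec(2))
  have "(cmod (r $ i))\<^sup>2 > 0" using ri by simp
  also have "(cmod (r $ i))\<^sup>2 \<le> (\<Sum>i<N. (cmod (r $ i))\<^sup>2)"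
    by (rule member_le_sum) (use i in auto)
  finally show ?thesis .
qed

lemma inner_diff_left: "x \<in> carrier_vec N \<Longrightarrow> y \<in> carrier_vec N \<Longrightarrow> w \<in> carrier_vec N \<Longrightarrow>
  inner (x - y) w = inner x w - inner y w"
proof -
  assume a: "x \<in> carrier_vec N" "y \<in> carrier_vec N" "w \<in> carrier_vec N"
  then have "x - y \<in> carrier_vec N" by simp
  then show ?thesis using a by (simp add: inner_eq_sum[OF \<open>x - y \<in> carrier_vec N\<close>] inner_eq_sum[OF a(1)] inner_eq_sum[OF a(2)] sum_subtractf left_diff_distrib)
qed

lemma hermitian_inner_real:
  assumes A: "A \<in> carrier_mat N N" and h: "hermitian A" and w: "w \<in> carrier_vec N"
  shows "inner w (A *\<^sub>v w) = complex_of_real (Re (inner w (A *\<^sub>v w)))"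
proof -
  have "inner w (A *\<^sub>v w) = inner (A *\<^sub>v w) w" using inner_adj[OF A w w] hermitian_adj[OF h] by simp
  also have "\<dots> = cnj (inner w (A *\<^sub>v w))" using inner_swap[OF w, of "A *\<^sub>v w"] A w by simp
  finally show ?thesis by (simp add: complex_eq_iff)
qed

lemma hermitian_diff:
  assumes "A \<in> carrier_mat N N" "B \<in> carrier_mat N N" "hermitian A" "hermitian B"
  shows "hermitian (A - B)"
  using assms by (auto simp: hermitian_iff[of _ N])

lemma psdD:
  assumes "psd N B" shows "B \<in> carrier_mat N N" "hermitian B"
  "\<And>v. v \<in> carrier_vec N \<Longrightarrow> 0 \<le> Re (inner v (B *\<^sub>v v))"
  using assms by (auto simp: psd_def)
lemma mult_carrier_mat_square[simp]: "A \<in> carrier_mat N N \<Longrightarrow> B \<in> carrier_mat N N \<Longrightarrow> A * B \<in> carrier_mat N N"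
  by (rule mult_carrier_mat)

lemma mtrace_mult_eq_sum: "P \<in> carrier_mat N N \<Longrightarrow> X \<in> carrier_mat N N \<Longrightarrow>
  mtrace (P * X) = (\<Sum>a<N. \<Sum>m<N. P $$ (a,m) * X $$ (m,a))"
  by (simp add: mtrace_eq_sum[of _ N] index_mult_mat_sum)

lemma mtrace_comm:
  assumes "A \<in> carrier_mat N N" "B \<in> carrier_mat N N"
  shows "mtrace (A * B) = mtrace (B * A)"
proof -
  have "mtrace (A * B) = (\<Sum>a<N. \<Sum>m<N. A $$ (a,m) * B $$ (m,a))" using assms by (rule mtrace_mult_eq_sum)
  also have "\<dots> = (\<Sum>m<N. \<Sum>a<N. B $$ (m,a) * A $$ (a,m))" by (subst sum.swap) (simp add: mult.commute)
  also have "\<dots> = mtrace (B * A)" using assms by (simp add: mtrace_mult_eq_sum)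
  finally show ?thesis .
qed

lemma msum_mult_left:
  assumes A: "A \<in> carrier_mat N N" and f: "\<And>j. j \<in> J \<Longrightarrow> f j \<in> carrier_mat N N"
  and fin: "finite J"
  shows "A * msum N J f = msum N J (\<lambda>j. A * f j)"
proof (rule eq_matI)
  fix a b assume "a < dim_row (msum N J (\<lambda>j. A * f j))" "b < dim_col (msum N J (\<lambda>j. A * f j))"
  then have a: "a < N" and b: "b < N" by (auto simp: msum_def)
  have "(A * msum N J f) $$ (a,b) = (\<Sum>m<N. \<Sum>j\<in>J. A $$ (a,m) * f j $$ (m,b))"
    using A a b by (simp add: index_mult_mat_sum sum_distrib_left)
  also have "\<dots> = (\<Sum>j\<in>J. \<Sum>m<N. A $$ (a,m) * f j $$ (m,b))" by (rule sum.swap)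
  also have "\<dots> = msum N J (\<lambda>j. A * f j) $$ (a,b)"
    using a b by (auto simp: index_mult_mat_sum[OF A f] intro!: sum.cong)
  finally show "(A * msum N J f) $$ (a,b) = msum N J (\<lambda>j. A * f j) $$ (a,b)" .
qed (use A in \<open>auto simp: msum_def\<close>)

lemma msum_mult_right:
  assumes A: "A \<in> carrier_mat N N" and f: "\<And>j. j \<in> J \<Longrightarrow> f j \<in> carrier_mat N N"
  and fin: "finite J"
  shows "msum N J f * A = msum N J (\<lambda>j. f j * A)"
proof (rule eq_matI)
  fix a b assume "a < dim_row (msum N J (\<lambda>j. f j * A))" "b < dim_col (msum N J (\<lambda>j. f j * A))"
  then have a: "a < N" and b: "b < N" by (auto simp: msum_def)
  have "(msum N J f * A) $$ (a,b) = (\<Sum>m<N. \<Sum>j\<in>J. f j $$ (a,m) * A $$ (m,b))"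
    using A a b by (simp add: index_mult_mat_sum[OF msum_carrier A a b] sum_distrib_right)
  also have "\<dots> = (\<Sum>j\<in>J. \<Sum>m<N. f j $$ (a,m) * A $$ (m,b))" by (rule sum.swap)
  also have "\<dots> = msum N J (\<lambda>j. f j * A) $$ (a,b)"
    using a b by (auto simp: index_mult_mat_sum[OF f A] intro!: sum.cong)
  finally show "(msum N J f * A) $$ (a,b) = msum N J (\<lambda>j. f j * A) $$ (a,b)" .
qed (use A in \<open>auto simp: msum_def\<close>)

lemma mtrace_msum:
  assumes "\<And>j. j \<in> J \<Longrightarrow> f j \<in> carrier_mat N N"
  shows "mtrace (msum N J f) = (\<Sum>j\<in>J. mtrace (f j))"
proof -
  have "mtrace (msum N J f) = (\<Sum>a<N. \<Sum>j\<in>J. f j $$ (a,a))" by (simp add: mtrace_eq_sum[of _ N])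
  also have "\<dots> = (\<Sum>j\<in>J. \<Sum>a<N. f j $$ (a,a))" by (rule sum.swap)
  also have "\<dots> = (\<Sum>j\<in>J. mtrace (f j))" by (intro sum.cong refl) (simp add: mtrace_eq_sum[OF assms])
  finally show ?thesis .
qed

lemma adj_msum:
  assumes "\<And>j. j \<in> J \<Longrightarrow> f j \<in> carrier_mat N N"
  shows "adj (msum N J f) = msum N J (\<lambda>j. adj (f j))"
proof (rule eq_matI)
  fix a b assume "a < dim_row (msum N J (\<lambda>j. adj (f j)))" "b < dim_col (msum N J (\<lambda>j. adj (f j)))"
  then have a: "a < N" and b: "b < N" by (auto simp: msum_def)
  have "adj (msum N J f) $$ (a,b) = (\<Sum>j\<in>J. cnj (f j $$ (b,a)))" using a b by (simp add: msum_def cnj_sum)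
  also have "\<dots> = msum N J (\<lambda>j. adj (f j)) $$ (a,b)"
  proof -
    have "\<And>j. j \<in> J \<Longrightarrow> cnj (f j $$ (b,a)) = adj (f j) $$ (a,b)"
    proof -
      fix j assume "j \<in> J"
      then have "f j \<in> carrier_mat N N" by (rule assms)
      then show "cnj (f j $$ (b,a)) = adj (f j) $$ (a,b)" using a b by auto
    qed
    then show ?thesis using a b by (auto intro!: sum.cong)
  qed
  finally show "adj (msum N J f) $$ (a,b) = msum N J (\<lambda>j. adj (f j)) $$ (a,b)" .
qed (auto simp: msum_def)

lemma msum_swap: "msum N I (\<lambda>i. msum N J (\<lambda>j. f i j)) = msum N J (\<lambda>j. msum N I (\<lambda>i. f i j))"
  by (rule eq_matI) (auto simp: msum_def intro: sum.swap)

lemma msum_cong: "(\<And>j. j \<in> J \<Longrightarrow> f j = g j) \<Longrightarrow> msum N J f = msum N J g"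
  by (simp add: msum_def)

lemma mtrace_minus: "A \<in> carrier_mat N N \<Longrightarrow> B \<in> carrier_mat N N \<Longrightarrow> mtrace (A - B) = mtrace A - mtrace B"
  by (simp add: mtrace_eq_sum[of _ N] sum_subtractf)
section \<open>Weighted sums of rank-one projections\<close>

definition rank1_sum :: "nat \<Rightarrow> nat \<Rightarrow> (nat \<Rightarrow> complex vec) \<Rightarrow> (nat \<Rightarrow> complex) \<Rightarrow> complex mat" where
  "rank1_sum N n u c = mat N N (\<lambda>(i,j). \<Sum>k<n. c k * (u k $ i) * cnj (u k $ j))"

definition orthonormal :: "nat \<Rightarrow> nat \<Rightarrow> (nat \<Rightarrow> complex vec) \<Rightarrow> bool" where
  "orthonormal N n u \<longleftrightarrow> (\<forall>k<n. u k \<in> carrier_vec N) \<and>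
     (\<forall>k<n. \<forall>l<n. inner (u k) (u l) = (if k = l then 1 else 0))"

lemma rank1_sum_carrier[simp]: "rank1_sum N n u c \<in> carrier_mat N N"
  by (simp add: rank1_sum_def)

lemma rank1_sum_index[simp]: "i < N \<Longrightarrow> j < N \<Longrightarrow> rank1_sum N n u c $$ (i,j) = (\<Sum>k<n. c k * (u k $ i) * cnj (u k $ j))"
  by (simp add: rank1_sum_def)

lemma rank1_sum_dims[simp]: "dim_row (rank1_sum N n u c) = N" "dim_col (rank1_sum N n u c) = N"
  by (simp_all add: rank1_sum_def)

lemma rank1_sum_mult_vec:
  assumes "\<And>k. k < n \<Longrightarrow> u k \<in> carrier_vec N" "v \<in> carrier_vec N"
  shows "rank1_sum N n u c *\<^sub>v v = vec N (\<lambda>i. \<Sum>k<n. (c k * inner (u k) v) * u k $ i)"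
proof (rule eq_vecI)
  fix i assume "i < dim_vec (vec N (\<lambda>i. \<Sum>k<n. (c k * inner (u k) v) * u k $ i))"
  then have i: "i < N" by simp
  have "(rank1_sum N n u c *\<^sub>v v) $ i = (\<Sum>j<N. \<Sum>k<n. c k * (u k $ i) * cnj (u k $ j) * v $ j)"
    using index_mult_mat_vec_sum[OF rank1_sum_carrier assms(2) i] i by (simp add: sum_distrib_right)
  also have "\<dots> = (\<Sum>k<n. \<Sum>j<N. c k * (u k $ i) * cnj (u k $ j) * v $ j)" by (rule sum.swap)
  also have "\<dots> = (\<Sum>k<n. (c k * inner (u k) v) * u k $ i)"
    using assms by (auto simp: inner_eq_sum[OF assms(1)] sum_distrib_left sum_distrib_right mult.commute mult.left_commute intro!: sum.cong)
  finally show "(rank1_sum N n u c *\<^sub>v v) $ i = vec N (\<lambda>i. \<Sum>k<n. (c k * inner (u k) v) * u k $ i) $ i"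
    using i by simp
qed (simp)

lemma orthonormalD: "orthonormal N n u \<Longrightarrow> k < n \<Longrightarrow> u k \<in> carrier_vec N"
  "orthonormal N n u \<Longrightarrow> k < n \<Longrightarrow> l < n \<Longrightarrow> inner (u k) (u l) = (if k = l then 1 else 0)"
  by (auto simp: orthonormal_def)

lemma sum_delta_mult: "(l::nat) < n \<Longrightarrow> (\<Sum>k<n. (if k = l then a else 0) * f k) = a * (f l :: 'a :: comm_ring_1)"
proof -
  assume l: "l < n"
  have "(\<Sum>k<n. (if k = l then a else 0) * f k) = (\<Sum>k<n. if k = l then a * f k else 0)"
    by (rule sum.cong) auto
  also have "\<dots> = a * f l" using l by (simp add: sum.delta)
  finally show ?thesis .
qed

lemma rank1_sum_mult_vec_basis:
  assumes o: "orthonormal N n u" and l: "l < n"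
  shows "rank1_sum N n u c *\<^sub>v u l = c l \<cdot>\<^sub>v u l"
proof -
  have "rank1_sum N n u c *\<^sub>v u l = vec N (\<lambda>i. \<Sum>k<n. (c k * inner (u k) (u l)) * u k $ i)"
    by (rule rank1_sum_mult_vec, insert o l, auto simp: orthonormal_def)
  also have "\<dots> = vec N (\<lambda>i. c l * u l $ i)"
    using o l by (simp add: orthonormalD(2) if_distrib[of "\<lambda>x. c _ * x"] sum_delta_mult cong: if_cong)
  also have "\<dots> = c l \<cdot>\<^sub>v u l" using orthonormalD(1)[OF o l] by (auto intro!: eq_vecI)
  finally show ?thesis .
qed

lemma rank1_sum_quadratic_basis:
  assumes o: "orthonormal N n u" and k: "k < n"
  shows "inner (u k) (rank1_sum N n u c *\<^sub>v u k) = c k"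
  using rank1_sum_mult_vec_basis[OF o k] inner_smult_right[OF orthonormalD(1)[OF o k] orthonormalD(1)[OF o k]]
    orthonormalD(2)[OF o k k] by simp

lemma sum_mult_delta: "(k::nat) < n \<Longrightarrow> (\<Sum>l<n. f l * (if k = l then 1 else 0)) = (f k :: 'a :: comm_ring_1)"
proof -
  assume k: "k < n"
  have "(\<Sum>l<n. f l * (if k = l then 1 else 0)) = (\<Sum>l<n. if k = l then f l else 0)"
    by (rule sum.cong) auto
  also have "\<dots> = f k" using k by (simp add: sum.delta)
  finally show ?thesis .
qed

lemma rank1_sum_mult:
  assumes o: "orthonormal N n u"
  shows "rank1_sum N n u c * rank1_sum N n u d = rank1_sum N n u (\<lambda>k. c k * d k)"
proof (rule eq_matI)
  fix i j assume "i < dim_row (rank1_sum N n u (\<lambda>k. c k * d k))" "j < dim_col (rank1_sum N n u (\<lambda>k. c k * d k))"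
  then have i: "i < N" and j: "j < N" by auto
  have "(rank1_sum N n u c * rank1_sum N n u d) $$ (i,j) = (\<Sum>m<N. (\<Sum>k<n. c k * u k $ i * cnj (u k $ m)) * (\<Sum>l<n. d l * u l $ m * cnj (u l $ j)))"
    using i j by (simp add: index_mult_mat_sum[OF rank1_sum_carrier rank1_sum_carrier])
  also have "\<dots> = (\<Sum>m<N. \<Sum>k<n. \<Sum>l<n. (c k * d l * u k $ i * cnj (u l $ j)) * (cnj (u k $ m) * u l $ m))"
    by (simp add: sum_product mult_ac)
  also have "\<dots> = (\<Sum>k<n. \<Sum>l<n. \<Sum>m<N. (c k * d l * u k $ i * cnj (u l $ j)) * (cnj (u k $ m) * u l $ m))"
    by (subst sum.swap, rule sum.cong[OF refl], rule sum.swap)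
  also have "\<dots> = (\<Sum>k<n. \<Sum>l<n. (c k * d l * u k $ i * cnj (u l $ j)) * inner (u k) (u l))"
    by (intro sum.cong refl) (simp add: inner_eq_sum[OF orthonormalD(1)[OF o]] sum_distrib_left)
  also have "\<dots> = (\<Sum>k<n. c k * d k * u k $ i * cnj (u k $ j))"
    by (intro sum.cong refl) (simp add: orthonormalD(2)[OF o] sum_mult_delta)
  finally show "(rank1_sum N n u c * rank1_sum N n u d) $$ (i,j) = rank1_sum N n u (\<lambda>k. c k * d k) $$ (i,j)"
    using i j by simp
qed auto

lemma adj_rank1_sum: "adj (rank1_sum N n u c) = rank1_sum N n u (\<lambda>k. cnj (c k))"
  by (rule eq_matI) (auto simp: cnj_sum mult_ac)

lemma hermitian_rank1_sum: "hermitian (rank1_sum N n u (\<lambda>k. complex_of_real (r k)))"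
  unfolding hermitian_def adj_rank1_sum by simp

lemma inner_rank1_sum:
  assumes "\<And>k. k < n \<Longrightarrow> u k \<in> carrier_vec N" "v \<in> carrier_vec N"
  shows "inner v (rank1_sum N n u c *\<^sub>v v) = (\<Sum>k<n. c k * complex_of_real ((cmod (inner (u k) v))\<^sup>2))"
proof -
  have "inner v (rank1_sum N n u c *\<^sub>v v) = (\<Sum>k<n. (c k * inner (u k) v) * inner v (u k))"
  proof -
    have "inner v (vec N (\<lambda>i. \<Sum>k<n. (c k * inner (u k) v) * u k $ i)) = (\<Sum>k<n. (c k * inner (u k) v) * inner v (u k))"
      by (rule inner_lincomb) (use assms in auto)
    then show ?thesis using rank1_sum_mult_vec[OF assms] by simp
  qed
  also have "\<dots> = (\<Sum>k<n. c k * complex_of_real ((cmod (inner (u k) v))\<^sup>2))"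
  proof (intro sum.cong refl)
    fix k assume "k \<in> {..<n}"
    then have k: "k < n" by simp
    show "c k * inner (u k) v * inner v (u k) = c k * complex_of_real ((cmod (inner (u k) v))\<^sup>2)"
      by (simp only: inner_swap[OF assms(1)[OF k] assms(2)] complex_norm_square mult.assoc)
  qed
  finally show ?thesis .
qed

lemma psd_rank1_sum:
  assumes "\<And>k. k < n \<Longrightarrow> u k \<in> carrier_vec N" "\<And>k. k < n \<Longrightarrow> r k \<ge> 0"
  shows "psd N (rank1_sum N n u (\<lambda>k. complex_of_real (r k)))"
  unfolding psd_def
proof (intro conjI ballI)
  fix v :: "complex vec" assume v: "v \<in> carrier_vec N"
  show "0 \<le> Re (inner v (rank1_sum N n u (\<lambda>k. complex_of_real (r k)) *\<^sub>v v))"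
  proof -
    have "Re (inner v (rank1_sum N n u (\<lambda>k. complex_of_real (r k)) *\<^sub>v v)) = (\<Sum>k<n. r k * (cmod (inner (u k) v))\<^sup>2)"
      using inner_rank1_sum[OF assms(1) v, where c="\<lambda>k. complex_of_real (r k)"] by (simp add: Re_sum)
    also have "\<dots> \<ge> 0" using assms(2) by (auto intro!: sum_nonneg)
    finally show ?thesis .
  qed
qed (auto simp: hermitian_rank1_sum)

lemma mtrace_rank1_sum:
  assumes o: "orthonormal N n u" shows "mtrace (rank1_sum N n u c) = (\<Sum>k<n. c k)"
proof -
  have "mtrace (rank1_sum N n u c) = (\<Sum>i<N. \<Sum>k<n. c k * u k $ i * cnj (u k $ i))"
    by (simp add: mtrace_eq_sum[OF rank1_sum_carrier])
  also have "\<dots> = (\<Sum>k<n. \<Sum>i<N. c k * u k $ i * cnj (u k $ i))" by (rule sum.swap)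
  also have "\<dots> = (\<Sum>k<n. c k * inner (u k) (u k))"
    by (intro sum.cong refl) (simp add: inner_eq_sum[OF orthonormalD(1)[OF o]] sum_distrib_left mult_ac)
  also have "\<dots> = (\<Sum>k<n. c k)" by (intro sum.cong refl) (simp add: orthonormalD(2)[OF o])
  finally show ?thesis .
qed

lemma mtrace_mult_rank1_sum:
  assumes X: "X \<in> carrier_mat N N" and u: "\<And>k. k < n \<Longrightarrow> u k \<in> carrier_vec N"
  shows "mtrace (X * rank1_sum N n u c) = (\<Sum>k<n. c k * inner (u k) (X *\<^sub>v u k))"
proof -
  have "mtrace (X * rank1_sum N n u c) = (\<Sum>i<N. \<Sum>m<N. \<Sum>k<n. X $$ (i,m) * (c k * u k $ m * cnj (u k $ i)))"
    using X by (simp add: mtrace_eq_sum[of _ N] index_mult_mat_sum sum_distrib_left)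
  also have "\<dots> = (\<Sum>k<n. \<Sum>i<N. \<Sum>m<N. X $$ (i,m) * (c k * u k $ m * cnj (u k $ i)))"
    by (subst sum.swap, rule sum.cong[OF refl], rule sum.swap)
  also have "\<dots> = (\<Sum>k<n. c k * inner (u k) (X *\<^sub>v u k))"
    by (intro sum.cong refl) (simp add: inner_eq_sum[OF u] index_mult_mat_vec_sum[OF X u] sum_distrib_left mult_ac)
  finally show ?thesis .
qed

lemma orthonormal_resolution_identity:
  assumes o: "orthonormal N N u" shows "rank1_sum N N u (\<lambda>_. 1) = 1\<^sub>m N"
proof -
  define U where "U = mat N N (\<lambda>(i,k). u k $ i)"
  have U: "U \<in> carrier_mat N N" by (simp add: U_def)
  have "adj U * U = 1\<^sub>m N"
  proof (rule eq_matI)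
    fix k l assume "k < dim_row (1\<^sub>m N)" "l < dim_col (1\<^sub>m N)"
    then have k: "k < N" and l: "l < N" by auto
    have "(adj U * U) $$ (k,l) = (\<Sum>m<N. adj U $$ (k,m) * U $$ (m,l))"
      using k l by (rule index_mult_mat_sum[OF adj_carrier[OF U] U])
    also have "\<dots> = inner (u k) (u l)" using k l by (simp add: U_def inner_eq_sum[OF orthonormalD(1)[OF o k]])
    finally have "(adj U * U) $$ (k,l) = inner (u k) (u l)" .
    then show "(adj U * U) $$ (k,l) = 1\<^sub>m N $$ (k,l)" using k l by (simp add: orthonormalD(2)[OF o])
  qed (use U in auto)
  then have UU: "U * adj U = 1\<^sub>m N" by (rule mat_mult_left_right_inverse[OF adj_carrier[OF U] U])
  have "rank1_sum N N u (\<lambda>_. 1) = U * adj U"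
  proof (rule eq_matI)
    fix i j assume "i < dim_row (U * adj U)" "j < dim_col (U * adj U)"
    then have i: "i < N" and j: "j < N" using U by auto
    have "(U * adj U) $$ (i,j) = (\<Sum>m<N. U $$ (i,m) * adj U $$ (m,j))"
      using i j by (rule index_mult_mat_sum[OF U adj_carrier[OF U]])
    also have "\<dots> = rank1_sum N N u (\<lambda>_. 1) $$ (i,j)" using i j by (simp add: U_def)
    finally show "rank1_sum N N u (\<lambda>_. 1) $$ (i,j) = (U * adj U) $$ (i,j)" by simp
  qed (use U in auto)
  then show ?thesis using UU by simp
qed

section \<open>The spectral theorem for hermitian matrices\<close>

lemma exists_normalizing_scalar:
  assumes r: "r \<in> carrier_vec N" and nz: "r \<noteq> 0\<^sub>v N"
  shows "\<exists>s. s \<noteq> 0 \<and> inner (s \<cdot>\<^sub>v r) (s \<cdot>\<^sub>v r) = 1"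
proof -
  define q where "q = (\<Sum>i<N. (cmod (r $ i))\<^sup>2)"
  have q: "q > 0" unfolding q_def by (rule sum_cmod_square_pos[OF r nz])
  define s where "s = complex_of_real (1 / sqrt q)"
  have "inner (s \<cdot>\<^sub>v r) (s \<cdot>\<^sub>v r) = cnj s * s * inner r r"
    using r by (simp add: inner_smult_left inner_smult_right)
  also have "\<dots> = complex_of_real ((1 / sqrt q) * (1 / sqrt q) * q)"
    unfolding inner_self[OF r] q_def[symmetric] s_def by (simp only: complex_cnj_complex_of_real of_real_mult)
  also have "\<dots> = 1"
  proof -
    have h: "sqrt q * sqrt q = q" using q by simp
    have "(1 / sqrt q) * (1 / sqrt q) * q = q / (sqrt q * sqrt q)" by simp
    also have "\<dots> = 1" using h q by simp
    finally show ?thesis by simp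
  qed
  finally show ?thesis using q by (intro exI[of _ s]) (simp add: s_def)
qed

lemma orthonormal_exists_orthogonal_unit:
  assumes o: "orthonormal N k u" and k: "k < N"
  shows "\<exists>w. w \<in> carrier_vec N \<and> inner w w = 1 \<and> (\<forall>i<k. inner (u i) w = 0)"
proof -
  define r where "r j = unit_vec N j - vec N (\<lambda>a. \<Sum>i<k. cnj (u i $ j) * u i $ a)" for j
  have rc: "r j \<in> carrier_vec N" for j by (simp add: r_def)
  have rperp: "inner (u l) (r j) = 0" if l: "l < k" and j: "j < N" for l j
  proof -
    have ul: "u l \<in> carrier_vec N" using orthonormalD(1)[OF o l] .
    have "inner (u l) (vec N (\<lambda>a. \<Sum>i<k. cnj (u i $ j) * u i $ a)) = (\<Sum>i<k. cnj (u i $ j) * inner (u l) (u i))"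
      by (rule inner_lincomb[OF ul]) (use o in \<open>auto simp: orthonormal_def\<close>)
    also have "\<dots> = cnj (u l $ j)"
      using l by (simp add: orthonormalD(2)[OF o] if_distrib[of "\<lambda>x. _ * x"] sum.delta cong: if_cong)
    finally show ?thesis unfolding r_def using ul j
      by (simp add: inner_diff[OF ul] inner_unit)
  qed
  have "\<exists>j<N. r j \<noteq> 0\<^sub>v N"
  proof (rule ccontr)
    assume "\<not> (\<exists>j<N. r j \<noteq> 0\<^sub>v N)"
    then have z: "\<And>j. j < N \<Longrightarrow> r j = 0\<^sub>v N" by auto
    have diag: "(\<Sum>i<k. cnj (u i $ j) * u i $ j) = 1" if j: "j < N" for j
    proof -
      have "r j $ j = 0" using z[OF j] j by simp
      then show ?thesis using j by (simp add: r_def)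
    qed
    have "(of_nat N :: complex) = (\<Sum>j<N. \<Sum>i<k. cnj (u i $ j) * u i $ j)"
      using diag by simp
    also have "\<dots> = (\<Sum>i<k. \<Sum>j<N. cnj (u i $ j) * u i $ j)" by (rule sum.swap)
    also have "\<dots> = (\<Sum>i<k. inner (u i) (u i))"
      by (intro sum.cong refl) (simp add: inner_eq_sum[OF orthonormalD(1)[OF o]])
    also have "\<dots> = of_nat k" by (simp add: orthonormalD(2)[OF o])
    finally have "N = k" by simp
    then show False using k by simp
  qed
  then obtain j where j: "j < N" and nz: "r j \<noteq> 0\<^sub>v N" by auto
  obtain s where s: "inner (s \<cdot>\<^sub>v r j) (s \<cdot>\<^sub>v r j) = 1" using exists_normalizing_scalar[OF rc nz] by auto
  show ?thesis
    by (rule exI[of _ "s \<cdot>\<^sub>v r j"])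
       (use s rc rperp j o in \<open>auto simp: inner_smult_right[OF orthonormalD(1)[OF o]]\<close>)
qed

lemma orthonormal_fun_upd:
  assumes o: "orthonormal N k u" and w: "w \<in> carrier_vec N" "inner w w = 1"
  "\<forall>i<k. inner (u i) w = 0"
  shows "orthonormal N (Suc k) (u(k := w))"
  unfolding orthonormal_def
proof (intro conjI allI impI)
  fix i assume "i < Suc k" then show "(u(k := w)) i \<in> carrier_vec N" using w o by (auto simp: orthonormal_def)
next
  fix i l assume i: "i < Suc k" and l: "l < Suc k"
  show "inner ((u(k := w)) i) ((u(k := w)) l) = (if i = l then 1 else 0)"
  proof (cases "i = k")
    case True
    then show ?thesis
    proof (cases "l = k")
      case False
      then have "l < k" using l by simp
      then show ?thesis using True False w inner_swap[OF w(1) orthonormalD(1)[OF o \<open>l < k\<close>]] by auto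
    qed (use w in auto)
  next
    case False
    then have "i < k" using i by simp
    then show ?thesis using False w o l by (cases "l = k") (auto simp: orthonormalD)
  qed
qed

lemma orthonormal_extend_basis:
  assumes "orthonormal N k u" "k \<le> N"
  shows "\<exists>w. orthonormal N N w \<and> (\<forall>i<k. w i = u i)"
  using assms
proof (induction "N - k" arbitrary: k u)
  case 0
  then have "k = N" by simp
  then show ?case using 0 by auto
next
  case (Suc d)
  then have k: "k < N" by simp
  obtain v where v: "v \<in> carrier_vec N" "inner v v = 1" "\<forall>i<k. inner (u i) v = 0"
    using orthonormal_exists_orthogonal_unit[OF Suc(3) k] by auto
  have o: "orthonormal N (Suc k) (u(k := v))" by (rule orthonormal_fun_upd[OF Suc(3) v])
  have "\<exists>w. orthonormal N N w \<and> (\<forall>i<Suc k. w i = (u(k := v)) i)"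
    by (rule Suc(1)[of "Suc k" "u(k := v)", OF _ o]) (use Suc(2) k in auto)
  then obtain w where w: "orthonormal N N w" "\<forall>i<Suc k. w i = (u(k := v)) i" by blast
  then show ?case by (intro exI[of _ w]) auto
qed

lemma orthonormal_basis_expansion:
  assumes o: "orthonormal N N w" and y: "y \<in> carrier_vec N"
  shows "y = vec N (\<lambda>r. \<Sum>i<N. inner (w i) y * w i $ r)"
proof -
  have "y = 1\<^sub>m N *\<^sub>v y" using y by simp
  also have "\<dots> = rank1_sum N N w (\<lambda>_. 1) *\<^sub>v y" by (simp add: orthonormal_resolution_identity[OF o])
  also have "\<dots> = vec N (\<lambda>r. \<Sum>i<N. inner (w i) y * w i $ r)"
    by (subst rank1_sum_mult_vec) (use o y in \<open>auto simp: orthonormal_def\<close>)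
  finally show ?thesis .
qed

lemma orthonormal_basis_eqI:
  assumes o: "orthonormal N N w" and y: "y \<in> carrier_vec N" and z: "z \<in> carrier_vec N"
  and eq: "\<And>i. i < N \<Longrightarrow> inner (w i) y = inner (w i) z"
  shows "y = z"
  using orthonormal_basis_expansion[OF o y] orthonormal_basis_expansion[OF o z] eq by simp

definition tail_comb :: "nat \<Rightarrow> nat \<Rightarrow> (nat \<Rightarrow> complex vec) \<Rightarrow> complex vec \<Rightarrow> complex vec" where
  "tail_comb N k w x = vec N (\<lambda>r. \<Sum>b<N - k. x $ b * w (k + b) $ r)"

definition compression :: "nat \<Rightarrow> nat \<Rightarrow> (nat \<Rightarrow> complex vec) \<Rightarrow> complex mat \<Rightarrow> complex mat" where
  "compression N k w A = mat (N - k) (N - k) (\<lambda>(a, b). inner (w (k + a)) (A *\<^sub>v w (k + b)))"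

lemma tail_comb_carrier[simp]: "tail_comb N k w x \<in> carrier_vec N"
  by (simp add: tail_comb_def)

lemma inner_tail_comb:
  assumes w: "orthonormal N N w" and y: "y \<in> carrier_vec N"
  shows "inner y (tail_comb N k w x) = (\<Sum>b<N - k. x $ b * inner y (w (k + b)))"
  unfolding tail_comb_def by (rule inner_lincomb[OF y]) (use orthonormalD(1)[OF w] in auto)

lemma inner_basis_tail_comb:
  assumes w: "orthonormal N N w" and i: "i < N"
  shows "inner (w i) (tail_comb N k w x) = (if i < k then 0 else x $ (i - k))"
proof -
  have "inner (w i) (tail_comb N k w x) = (\<Sum>b<N - k. x $ b * (if i = k + b then 1 else 0))"
    using inner_tail_comb[OF w orthonormalD(1)[OF w i]] i by (simp add: orthonormalD(2)[OF w])
  also have "\<dots> = (\<Sum>b<N - k. if b = i - k \<and> \<not> i < k then x $ b else 0)"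
    by (intro sum.cong refl) auto
  also have "\<dots> = (if i < k then 0 else x $ (i - k))"
    using i by (cases "i < k") (auto simp: sum.delta)
  finally show ?thesis .
qed

lemma inner_basis_mult_tail_comb:
  assumes A: "A \<in> carrier_mat N N" "hermitian A" and w: "orthonormal N N w"
    and a: "a < N - k" and x: "x \<in> carrier_vec (N - k)"
  shows "inner (w (k + a)) (A *\<^sub>v tail_comb N k w x) = (compression N k w A *\<^sub>v x) $ a"
proof -
  have wc: "\<And>i. i < N \<Longrightarrow> w i \<in> carrier_vec N" by (rule orthonormalD(1)[OF w])
  have "inner (w (k + a)) (A *\<^sub>v tail_comb N k w x) = inner (A *\<^sub>v w (k + a)) (tail_comb N k w x)"
    using inner_adj[OF A(1) wc] a hermitian_adj[OF A(2)] by simp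
  also have "\<dots> = (\<Sum>b<N - k. x $ b * inner (A *\<^sub>v w (k + a)) (w (k + b)))"
    using A(1) wc a by (intro inner_tail_comb[OF w]) simp
  also have "\<dots> = (\<Sum>b<N - k. compression N k w A $$ (a, b) * x $ b)"
    using inner_adj[OF A(1) wc wc] hermitian_adj[OF A(2)] a
    by (intro sum.cong refl) (simp add: compression_def)
  also have "\<dots> = (compression N k w A *\<^sub>v x) $ a"
    using index_mult_mat_vec_sum[of "compression N k w A" "N - k" x a] x a by (simp add: compression_def)
  finally show ?thesis .
qed

text \<open>A hermitian matrix leaves the orthogonal complement of a family of its eigenvectors invariant;
  an eigenvector of its compression to that complement is an eigenvector of the matrix itself.\<close>

lemma hermitian_exists_orthogonal_eigenvector:
  assumes A: "A \<in> carrier_mat N N" "hermitian A" and o: "orthonormal N k u" and k: "k < N"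
    and ev: "\<forall>i<k. \<exists>c. A *\<^sub>v u i = c \<cdot>\<^sub>v u i"
  shows "\<exists>v \<mu>. v \<in> carrier_vec N \<and> v \<noteq> 0\<^sub>v N \<and> (\<forall>i<k. inner (u i) v = 0) \<and> A *\<^sub>v v = \<mu> \<cdot>\<^sub>v v"
proof -
  obtain w where w: "orthonormal N N w" and wu: "\<forall>i<k. w i = u i"
    using orthonormal_extend_basis[OF o] k by auto
  have wc: "\<And>i. i < N \<Longrightarrow> w i \<in> carrier_vec N" by (rule orthonormalD(1)[OF w])
  have C: "compression N k w A \<in> carrier_mat (N - k) (N - k)" by (simp add: compression_def)
  obtain \<mu> where "\<mu> \<in> spectrum (compression N k w A)" using spectrum_non_empty[OF C] k by auto
  then obtain x where "eigenvector (compression N k w A) x \<mu>" by (auto simp: spectrum_def eigenvalue_def)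
  then have x: "x \<in> carrier_vec (N - k)" "x \<noteq> 0\<^sub>v (N - k)" "compression N k w A *\<^sub>v x = \<mu> \<cdot>\<^sub>v x"
    using C by (auto simp: eigenvector_def)
  define v where "v = tail_comb N k w x"
  have coef: "inner (w i) v = (if i < k then 0 else x $ (i - k))" if "i < N" for i
    unfolding v_def by (rule inner_basis_tail_comb[OF w that])
  have "A *\<^sub>v v = \<mu> \<cdot>\<^sub>v v"
  proof (rule orthonormal_basis_eqI[OF w])
    fix i assume i: "i < N"
    show "inner (w i) (A *\<^sub>v v) = inner (w i) (\<mu> \<cdot>\<^sub>v v)"
    proof (cases "i < k")
      case True
      then obtain c where c: "A *\<^sub>v w i = c \<cdot>\<^sub>v w i" using ev wu by auto
      have "inner (w i) (A *\<^sub>v v) = inner (A *\<^sub>v w i) v"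
        using inner_adj[OF A(1) wc[OF i]] hermitian_adj[OF A(2)] by (simp add: v_def)
      then show ?thesis
        using c coef[OF i] True wc[OF i] by (simp add: inner_smult_left inner_smult_right v_def)
    next
      case False
      then have "i = k + (i - k)" "i - k < N - k" using i by auto
      then show ?thesis
        using inner_basis_mult_tail_comb[OF A w _ x(1), of "i - k"] coef[OF i] False x(3) x(1) wc[OF i]
        by (simp add: inner_smult_right v_def)
    qed
  qed (use A(1) in \<open>simp_all add: v_def\<close>)
  moreover have "v \<noteq> 0\<^sub>v N"
  proof
    assume "v = 0\<^sub>v N"
    then have "x $ a = 0" if "a < N - k" for a
      using coef[of "k + a"] inner_zero_right[OF wc, of "k + a"] that by simp
    then show False using x(1,2) by (auto intro!: eq_vecI)
  qed
  moreover have "\<forall>i<k. inner (u i) v = 0"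
  proof (intro allI impI)
    fix i assume "i < k"
    then show "inner (u i) v = 0" using coef[of i] wu k by simp
  qed
  moreover have "v \<in> carrier_vec N" by (simp add: v_def)
  ultimately show ?thesis by blast
qed

lemma hermitian_orthonormal_eigenvectors:
  assumes A: "A \<in> carrier_mat N N" "hermitian A"
  shows "k \<le> N \<Longrightarrow> \<exists>u. orthonormal N k u \<and> (\<forall>i<k. \<exists>c. A *\<^sub>v u i = c \<cdot>\<^sub>v u i)"
proof (induction k)
  case 0
  show ?case by (intro exI[of _ "\<lambda>_. 0\<^sub>v N"]) (simp add: orthonormal_def)
next
  case (Suc k)
  then obtain u where u: "orthonormal N k u" "\<forall>i<k. \<exists>c. A *\<^sub>v u i = c \<cdot>\<^sub>v u i" by auto
  obtain v c where v: "v \<in> carrier_vec N" "v \<noteq> 0\<^sub>v N" "\<forall>i<k. inner (u i) v = 0" "A *\<^sub>v v = c \<cdot>\<^sub>v v"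
    using hermitian_exists_orthogonal_eigenvector[OF A u(1) _ u(2)] Suc(2) by auto
  obtain s where s: "inner (s \<cdot>\<^sub>v v) (s \<cdot>\<^sub>v v) = 1" using exists_normalizing_scalar[OF v(1,2)] by auto
  have "orthonormal N (Suc k) (u(k := s \<cdot>\<^sub>v v))"
    by (rule orthonormal_fun_upd[OF u(1)])
      (use v s in \<open>auto simp: inner_smult_right[OF orthonormalD(1)[OF u(1)] v(1)]\<close>)
  moreover have "A *\<^sub>v (s \<cdot>\<^sub>v v) = c \<cdot>\<^sub>v (s \<cdot>\<^sub>v v)"
    using v(1,4) A(1) by (simp add: mult_mat_vec smult_smult_assoc mult.commute)
  then have "\<forall>i<Suc k. \<exists>c. A *\<^sub>v (u(k := s \<cdot>\<^sub>v v)) i = c \<cdot>\<^sub>v (u(k := s \<cdot>\<^sub>v v)) i"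
    using u(2) by (auto simp: less_Suc_eq)
  ultimately show ?case by blast
qed

lemma index_mult_rank1_sum:
  assumes X: "X \<in> carrier_mat N N" and u: "\<And>k. k < n \<Longrightarrow> u k \<in> carrier_vec N"
  and i: "i < N" and j: "j < N"
  shows "(X * rank1_sum N n u c) $$ (i,j) = (\<Sum>k<n. c k * (X *\<^sub>v u k) $ i * cnj (u k $ j))"
proof -
  have "(X * rank1_sum N n u c) $$ (i,j) = (\<Sum>m<N. \<Sum>k<n. X $$ (i,m) * (c k * u k $ m * cnj (u k $ j)))"
    using X i j by (simp add: index_mult_mat_sum sum_distrib_left)
  also have "\<dots> = (\<Sum>k<n. \<Sum>m<N. X $$ (i,m) * (c k * u k $ m * cnj (u k $ j)))" by (rule sum.swap)
  also have "\<dots> = (\<Sum>k<n. c k * (X *\<^sub>v u k) $ i * cnj (u k $ j))"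
  proof (intro sum.cong refl)
    fix k assume "k \<in> {..<n}"
    then have k: "k < n" by simp
    show "(\<Sum>m<N. X $$ (i,m) * (c k * u k $ m * cnj (u k $ j))) = c k * (X *\<^sub>v u k) $ i * cnj (u k $ j)"
      by (simp add: index_mult_mat_vec_sum[OF X u[OF k] i] sum_distrib_left sum_distrib_right mult_ac)
  qed
  finally show ?thesis .
qed

lemma hermitian_spectral_decomposition:
  assumes A: "A \<in> carrier_mat N N" and h: "hermitian A"
  shows "\<exists>u lam. orthonormal N N u \<and> A = rank1_sum N N u (\<lambda>k. complex_of_real (lam k))"
proof -
  obtain u where o: "orthonormal N N u" and e: "\<forall>i<N. \<exists>c. A *\<^sub>v u i = c \<cdot>\<^sub>v u i"
    using hermitian_orthonormal_eigenvectors[OF A h, of N] by auto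
  from e obtain c where c: "\<And>i. i < N \<Longrightarrow> A *\<^sub>v u i = c i \<cdot>\<^sub>v u i" by metis
  have uc: "\<And>i. i < N \<Longrightarrow> u i \<in> carrier_vec N" using o by (simp add: orthonormal_def)
  have real: "c i = complex_of_real (Re (c i))" if i: "i < N" for i
  proof -
    have "inner (u i) (A *\<^sub>v u i) = c i" using c[OF i] inner_smult_right[OF uc[OF i] uc[OF i]] orthonormalD(2)[OF o i i] by simp
    moreover have "inner (u i) (A *\<^sub>v u i) = cnj (c i)"
      using inner_adj[OF A uc[OF i] uc[OF i]] hermitian_adj[OF h] c[OF i] inner_smult_left[OF uc[OF i] uc[OF i]]
        orthonormalD(2)[OF o i i] by simp
    ultimately have "c i = cnj (c i)" by simp
    then show ?thesis by (simp add: complex_eq_iff)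
  qed
  have "A = rank1_sum N N u (\<lambda>k. complex_of_real (Re (c k)))"
  proof (rule eq_matI)
    fix i j assume "i < dim_row (rank1_sum N N u (\<lambda>k. complex_of_real (Re (c k))))"
      "j < dim_col (rank1_sum N N u (\<lambda>k. complex_of_real (Re (c k))))"
    then have i: "i < N" and j: "j < N" by auto
    have "A $$ (i,j) = (A * rank1_sum N N u (\<lambda>_. 1)) $$ (i,j)" using A i j by (simp add: orthonormal_resolution_identity[OF o])
    also have "\<dots> = (\<Sum>k<N. 1 * (A *\<^sub>v u k) $ i * cnj (u k $ j))" by (rule index_mult_rank1_sum[OF A uc i j])
    also have "\<dots> = rank1_sum N N u (\<lambda>k. complex_of_real (Re (c k))) $$ (i,j)"
    proof -
      have "\<And>k. k < N \<Longrightarrow> 1 * (A *\<^sub>v u k) $ i * cnj (u k $ j) = complex_of_real (Re (c k)) * u k $ i * cnj (u k $ j)"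
      proof -
        fix k assume k: "k < N"
        have "dim_vec (u k) = N" using uc[OF k] by simp
        then show "1 * (A *\<^sub>v u k) $ i * cnj (u k $ j) = complex_of_real (Re (c k)) * u k $ i * cnj (u k $ j)"
          using c[OF k] i real[OF k] by simp
      qed
      then show ?thesis using i j by (auto intro!: sum.cong)
    qed
    finally show "A $$ (i,j) = rank1_sum N N u (\<lambda>k. complex_of_real (Re (c k))) $$ (i,j)" .
  qed (use A in auto)
  then show ?thesis using o by (intro exI[of _ u] exI[of _ "\<lambda>k. Re (c k)"]) simp
qed

section \<open>Positive square roots and the trace distance\<close>

lemma psd_kernelI:
  assumes p: "psd N B" and w: "w \<in> carrier_vec N" and z: "inner w (B *\<^sub>v w) = 0"
  shows "B *\<^sub>v w = 0\<^sub>v N"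
proof -
  note B = psdD[OF p]
  obtain z lam where o: "orthonormal N N z" and Bs: "B = rank1_sum N N z (\<lambda>k. complex_of_real (lam k))"
    using hermitian_spectral_decomposition[OF B(1) B(2)] by auto
  have zc: "\<And>k. k < N \<Longrightarrow> z k \<in> carrier_vec N" by (rule orthonormalD(1)[OF o])
  have lam: "lam k \<ge> 0" if k: "k < N" for k
    using rank1_sum_quadratic_basis[OF o k, of "\<lambda>k. complex_of_real (lam k)"] B(3)[OF zc[OF k]] Bs by simp
  have "0 = Re (inner w (B *\<^sub>v w))" using z by simp
  also have "\<dots> = (\<Sum>k<N. lam k * (cmod (inner (z k) w))\<^sup>2)"
    using inner_rank1_sum[OF zc w, where c="\<lambda>k. complex_of_real (lam k)"] Bs by (simp add: Re_sum)
  finally have "(\<Sum>k<N. lam k * (cmod (inner (z k) w))\<^sup>2) = 0" by simp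
  then have "\<forall>k\<in>{..<N}. lam k * (cmod (inner (z k) w))\<^sup>2 = 0"
    by (subst sum_nonneg_eq_0_iff[symmetric]) (use lam in auto)
  then have each: "complex_of_real (lam k) * inner (z k) w = 0" if "k < N" for k
    using that by auto
  have "B *\<^sub>v w = vec N (\<lambda>i. \<Sum>k<N. (complex_of_real (lam k) * inner (z k) w) * z k $ i)"
    unfolding Bs by (rule rank1_sum_mult_vec[OF zc w])
  also have "\<dots> = 0\<^sub>v N" by (rule eq_vecI) (simp_all add: each)
  finally show ?thesis .
qed

text \<open>With \<open>a = B w\<close> and \<open>b = B' w\<close>, where \<open>(B - B') w = m w\<close>:
  \<open>0 = \<langle>a, a\<rangle> - \<langle>b, b\<rangle> = \<langle>a, a - b\<rangle> + \<langle>a - b, b\<rangle> = m (\<langle>w, B w\<rangle> + \<langle>w, B' w\<rangle>)\<close>,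
  a sum of two nonnegative terms; if \<open>m \<noteq> 0\<close> both vanish, so \<open>a = b = 0\<close> and \<open>m w = 0\<close>.\<close>

lemma psd_sqrt_diff_eigenvalue_zero:
  assumes p: "psd N B" and p': "psd N B'" and sq: "B * B = B' * B'"
    and w: "w \<in> carrier_vec N" "inner w w = 1" and ev: "(B - B') *\<^sub>v w = complex_of_real m \<cdot>\<^sub>v w"
  shows "m = 0"
proof (rule ccontr)
  assume nz: "m \<noteq> 0"
  note B = psdD[OF p] and B' = psdD[OF p']
  define a where "a = B *\<^sub>v w"
  define b where "b = B' *\<^sub>v w"
  have ac: "a \<in> carrier_vec N" "b \<in> carrier_vec N" using B(1) B'(1) w by (auto simp: a_def b_def)
  have amb: "a - b = complex_of_real m \<cdot>\<^sub>v w"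
    using ev B(1) B'(1) w by (simp add: a_def b_def minus_mult_distrib_mat_vec)
  have "inner a a = inner w ((B * B) *\<^sub>v w)"
    using inner_adj[OF B(1) w(1) ac(1)] hermitian_adj[OF B(2)] B(1) w by (simp add: a_def assoc_mult_mat_vec)
  moreover have "inner b b = inner w ((B' * B') *\<^sub>v w)"
    using inner_adj[OF B'(1) w(1) ac(2)] hermitian_adj[OF B'(2)] B'(1) w by (simp add: b_def assoc_mult_mat_vec)
  ultimately have "inner a a - inner b b = 0" using sq by simp
  moreover have "inner a a - inner b b = inner a (a - b) + inner (a - b) b"
    using ac by (simp add: inner_diff inner_diff_left)
  moreover have "inner a w = inner w a"
    using inner_adj[OF B(1) w(1) w(1)] hermitian_adj[OF B(2)] by (simp add: a_def)
  ultimately have "complex_of_real m * (inner w a + inner w b) = 0"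
    unfolding amb using ac w by (simp add: inner_smult_right inner_smult_left distrib_left)
  then have "inner w a + inner w b = 0" using nz by simp
  then have "Re (inner w a) + Re (inner w b) = 0" by (metis plus_complex.sel(1) zero_complex.sel(1))
  moreover have "Re (inner w a) \<ge> 0" "Re (inner w b) \<ge> 0" using B(3) B'(3) w by (simp_all add: a_def b_def)
  ultimately have "Re (inner w a) = 0" "Re (inner w b) = 0" by linarith+
  then have "inner w a = 0" "inner w b = 0"
    using hermitian_inner_real[OF B(1,2) w(1)] hermitian_inner_real[OF B'(1,2) w(1)]
    by (simp_all add: a_def b_def)
  then have "complex_of_real m \<cdot>\<^sub>v w = 0\<^sub>v N" using amb psd_kernelI[OF p w(1)] psd_kernelI[OF p' w(1)] by (simp add: a_def b_def)
  then have "inner w (complex_of_real m \<cdot>\<^sub>v w) = 0" using inner_zero_right[OF w(1)] by simp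
  then show False using inner_smult_right[OF w(1) w(1)] w(2) nz by simp
qed

lemma psd_sqrt_unique:
  assumes p: "psd N B" and p': "psd N B'" and sq: "B * B = B' * B'"
  shows "B = B'"
proof -
  note B = psdD[OF p] and B' = psdD[OF p']
  have Hc: "B - B' \<in> carrier_mat N N" using B'(1) by simp
  obtain v mu where o: "orthonormal N N v" and Hs: "B - B' = rank1_sum N N v (\<lambda>k. complex_of_real (mu k))"
    using hermitian_spectral_decomposition[OF Hc hermitian_diff[OF B(1) B'(1) B(2) B'(2)]] by auto
  have "mu k = 0" if k: "k < N" for k
    using psd_sqrt_diff_eigenvalue_zero[OF p p' sq orthonormalD(1)[OF o k], of "mu k"]
      orthonormalD(2)[OF o k k] rank1_sum_mult_vec_basis[OF o k] Hs by simp
  then have "B - B' = 0\<^sub>m N N" unfolding Hs by (intro eq_matI) auto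
  show ?thesis
  proof (rule eq_matI)
    fix i j assume "i < dim_row B'" "j < dim_col B'"
    then show "B $$ (i, j) = B' $$ (i, j)"
      using arg_cong[OF \<open>B - B' = 0\<^sub>m N N\<close>, of "\<lambda>X. X $$ (i, j)"] B(1) B'(1) by simp
  qed (use B(1) B'(1) in auto)
qed

lemma mat_abs_eqI:
  assumes p: "psd N B" and sq: "B * B = adj A * A"
  shows "mat_abs N A = B"
  unfolding mat_abs_def
proof (rule the_equality)
  show "psd N B \<and> B * B = adj A * A" using p sq by simp
  fix C assume "psd N C \<and> C * C = adj A * A"
  then show "C = B" using psd_sqrt_unique[of N C B] p sq by auto
qed

lemma trace_dist_rank1_sum:
  assumes X: "X \<in> carrier_mat N N" and Y: "Y \<in> carrier_mat N N"
  and o: "orthonormal N n u" and eq: "X - Y = rank1_sum N n u (\<lambda>k. complex_of_real (lam k))"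
  shows "trace_dist N X Y = (\<Sum>k<n. \<bar>lam k\<bar>) / 2"
proof -
  have uc: "\<And>k. k < n \<Longrightarrow> u k \<in> carrier_vec N" using o by (simp add: orthonormal_def)
  have ps: "psd N (rank1_sum N n u (\<lambda>k. complex_of_real \<bar>lam k\<bar>))" by (rule psd_rank1_sum[OF uc]) auto
  have "rank1_sum N n u (\<lambda>k. complex_of_real \<bar>lam k\<bar>) * rank1_sum N n u (\<lambda>k. complex_of_real \<bar>lam k\<bar>)
      = rank1_sum N n u (\<lambda>k. complex_of_real \<bar>lam k\<bar> * complex_of_real \<bar>lam k\<bar>)" by (rule rank1_sum_mult[OF o])
  also have "(\<lambda>k. complex_of_real \<bar>lam k\<bar> * complex_of_real \<bar>lam k\<bar>) = (\<lambda>k. cnj (complex_of_real (lam k)) * complex_of_real (lam k))"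
    by (rule ext) (simp flip: of_real_mult)
  also have "rank1_sum N n u \<dots> = adj (X - Y) * (X - Y)" unfolding eq adj_rank1_sum by (rule rank1_sum_mult[OF o, symmetric])
  finally have "mat_abs N (X - Y) = rank1_sum N n u (\<lambda>k. complex_of_real \<bar>lam k\<bar>)"
    using mat_abs_eqI[OF ps] by simp
  then show ?thesis unfolding trace_dist_def using mtrace_rank1_sum[OF o] by (simp add: Re_sum)
qed

lemma trace_dist_orthogonal_diff:
  assumes X: "X \<in> carrier_mat N N" and Y: "Y \<in> carrier_mat N N"
    and \<psi>: "is_unit_vec N \<psi>" and \<phi>: "is_unit_vec N \<phi>" and o: "inner \<psi> \<phi> = 0" and t: "0 \<le> t"
    and eq: "X - Y = complex_of_real t \<cdot>\<^sub>m (proj \<psi> - proj \<phi>)"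
  shows "trace_dist N X Y = t"
proof -
  have pc: "\<psi> \<in> carrier_vec N" "inner \<psi> \<psi> = 1" using \<psi> by (auto simp: is_unit_vec_def)
  have fc: "\<phi> \<in> carrier_vec N" "inner \<phi> \<phi> = 1" using \<phi> by (auto simp: is_unit_vec_def)
  have o2: "inner \<phi> \<psi> = 0" using inner_swap[OF pc(1) fc(1)] o by simp
  define u where "u k = (if k = 0 then \<psi> else \<phi>)" for k :: nat
  have ou: "orthonormal N 2 u" unfolding orthonormal_def u_def using pc fc o o2 by (auto simp: less_2_cases_iff)
  have "X - Y = rank1_sum N 2 u (\<lambda>k. complex_of_real (if k = 0 then t else - t))"
    unfolding eq by (rule eq_matI) (use pc fc in \<open>auto simp: u_def proj_def numeral_2_eq_2 lessThan_Suc algebra_simps\<close>)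
  from trace_dist_rank1_sum[OF X Y ou this] show ?thesis using t by (simp add: numeral_2_eq_2 lessThan_Suc)
qed

lemma proj_carrier[simp]: "w \<in> carrier_vec N \<Longrightarrow> proj w \<in> carrier_mat N N"
  by (simp add: proj_def)

lemma trace_dist_proj_orthogonal:
  assumes "is_unit_vec N \<psi>" "is_unit_vec N \<phi>" "inner \<psi> \<phi> = 0"
  shows "trace_dist N (proj \<psi>) (proj \<phi>) = 1"
  using assms by (intro trace_dist_orthogonal_diff[OF _ _ assms]) (auto simp: is_unit_vec_def)

lemma proj_eq_rank1_sum: "w \<in> carrier_vec N \<Longrightarrow> proj w = rank1_sum N 1 (\<lambda>_. w) (\<lambda>_. 1)"
  by (rule eq_matI) (auto simp: proj_def)

lemma mtrace_mult_proj:
  assumes X: "X \<in> carrier_mat N N" and w: "w \<in> carrier_vec N"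
  shows "mtrace (X * proj w) = inner w (X *\<^sub>v w)"
  using mtrace_mult_rank1_sum[OF X, of 1 "\<lambda>_. w" "\<lambda>_. 1"] w by (simp add: proj_eq_rank1_sum[OF w])

lemma density_proj:
  assumes "is_unit_vec N \<psi>" shows "density N (proj \<psi>)"
proof -
  have w: "\<psi> \<in> carrier_vec N" and u: "inner \<psi> \<psi> = 1" using assms by (auto simp: is_unit_vec_def)
  have o: "orthonormal N 1 (\<lambda>_. \<psi>)" using w u by (simp add: orthonormal_def)
  have "psd N (rank1_sum N 1 (\<lambda>_. \<psi>) (\<lambda>_. complex_of_real 1))" by (rule psd_rank1_sum) (use w in auto)
  moreover have "mtrace (rank1_sum N 1 (\<lambda>_. \<psi>) (\<lambda>_. 1)) = 1" using mtrace_rank1_sum[OF o] by simp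
  ultimately show ?thesis by (simp add: density_def proj_eq_rank1_sum[OF w])
qed

lemma smult_mat_mult_vec:
  assumes A: "A \<in> carrier_mat N N" and v: "v \<in> carrier_vec N"
  shows "(k \<cdot>\<^sub>m A) *\<^sub>v v = k \<cdot>\<^sub>v (A *\<^sub>v v)"
proof (rule eq_vecI)
  fix i assume "i < dim_vec (k \<cdot>\<^sub>v (A *\<^sub>v v))"
  then have i: "i < N" using A by simp
  have kA: "k \<cdot>\<^sub>m A \<in> carrier_mat N N" using A by simp
  show "((k \<cdot>\<^sub>m A) *\<^sub>v v) $ i = (k \<cdot>\<^sub>v (A *\<^sub>v v)) $ i"
    using A i by (simp add: index_mult_mat_vec_sum[OF kA v i] index_mult_mat_vec_sum[OF A v i] sum_distrib_left mult.assoc)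
qed (use A in simp)

lemma density_convex_comb:
  assumes X: "density N X" and Y: "density N Y" and e: "0 \<le> e" "e \<le> 1"
  shows "density N (complex_of_real e \<cdot>\<^sub>m X + (1 - complex_of_real e) \<cdot>\<^sub>m Y)"
proof -
  note pX = psdD[OF conjunct1[OF X[unfolded density_def]]]
  note pY = psdD[OF conjunct1[OF Y[unfolded density_def]]]
  define Z where "Z = complex_of_real e \<cdot>\<^sub>m X + (1 - complex_of_real e) \<cdot>\<^sub>m Y"
  have Z: "Z \<in> carrier_mat N N" using pX pY by (simp add: Z_def)
  have hx: "\<And>i j. i < N \<Longrightarrow> j < N \<Longrightarrow> cnj (X $$ (j,i)) = X $$ (i,j)"
    using hermitian_iff[OF pX(1)] pX(2) by auto
  have hy: "\<And>i j. i < N \<Longrightarrow> j < N \<Longrightarrow> cnj (Y $$ (j,i)) = Y $$ (i,j)"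
    using hermitian_iff[OF pY(1)] pY(2) by auto
  have h: "hermitian Z"
    unfolding hermitian_iff[OF Z] using pX(1) pY(1) by (auto simp: Z_def hx hy)
  have ps: "0 \<le> Re (inner v (Z *\<^sub>v v))" if v: "v \<in> carrier_vec N" for v
  proof -
    have "Z *\<^sub>v v = complex_of_real e \<cdot>\<^sub>v (X *\<^sub>v v) + (1 - complex_of_real e) \<cdot>\<^sub>v (Y *\<^sub>v v)"
      using pX(1) pY(1) v by (simp add: Z_def add_mult_distrib_mat_vec[of _ N N] smult_mat_mult_vec)
    then have "inner v (Z *\<^sub>v v) = complex_of_real e * inner v (X *\<^sub>v v) + (1 - complex_of_real e) * inner v (Y *\<^sub>v v)"
      using pX(1) pY(1) v by (simp add: inner_add[OF v] inner_smult_right[OF v])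
    then have "Re (inner v (Z *\<^sub>v v)) = e * Re (inner v (X *\<^sub>v v)) + (1 - e) * Re (inner v (Y *\<^sub>v v))"
      by simp
    also have "\<dots> \<ge> 0" using pX(3)[OF v] pY(3)[OF v] e by simp
    finally show ?thesis .
  qed
  have "mtrace Z = complex_of_real e * mtrace X + (1 - complex_of_real e) * mtrace Y"
    using pX(1) pY(1) Z by (simp add: mtrace_eq_sum[of _ N] Z_def sum.distrib sum_distrib_left)
  then have "mtrace Z = 1" using X Y by (simp add: density_def)
  then show ?thesis using Z h ps by (simp add: density_def psd_def Z_def)
qed

lemma density_eq_if_dim_less_2:
  assumes N: "N < 2" and r: "density N \<rho>" and s: "density N \<sigma>"
  shows "\<rho> = \<sigma>"
proof -
  have rc: "\<rho> \<in> carrier_mat N N" "mtrace \<rho> = 1" and sc: "\<sigma> \<in> carrier_mat N N" "mtrace \<sigma> = 1"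
    using r s by (auto simp: density_def psd_def)
  show ?thesis
  proof (cases "N = 0")
    case True
    then show ?thesis using rc by (simp add: mtrace_eq_sum[OF rc(1)])
  next
    case False
    then have N1: "N = 1" using N by simp
    have "\<rho> $$ (0,0) = 1" "\<sigma> $$ (0,0) = 1" using rc sc N1 by (auto simp: mtrace_eq_sum[of _ 1])
    then show ?thesis using rc(1) sc(1) N1 by (intro eq_matI) auto
  qed
qed

lemma trace_dist_nonneg:
  assumes "density N \<rho>" "density N \<sigma>"
  shows "trace_dist N \<rho> \<sigma> \<ge> 0"
proof -
  have c: "\<rho> \<in> carrier_mat N N" "\<sigma> \<in> carrier_mat N N" "hermitian \<rho>" "hermitian \<sigma>"
    using assms by (auto simp: density_def psd_def)
  obtain u lam where o: "orthonormal N N u" and eq: "\<rho> - \<sigma> = rank1_sum N N u (\<lambda>k. complex_of_real (lam k))"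
    using hermitian_spectral_decomposition[OF _ hermitian_diff[OF c]] minus_carrier_mat[OF c(2)] c(1) by blast
  have "0 \<le> (\<Sum>k<N. \<bar>lam k\<bar>)" by (simp add: sum_nonneg)
  then show ?thesis using trace_dist_rank1_sum[OF c(1,2) o eq] by linarith
qed

lemma trace_dist_mixture:
  assumes \<psi>: "is_unit_vec N \<psi>" and \<phi>: "is_unit_vec N \<phi>" and o: "inner \<psi> \<phi> = 0"
    and \<sigma>: "\<sigma> \<in> carrier_mat N N" and e: "0 \<le> e"
  shows "trace_dist N (complex_of_real e \<cdot>\<^sub>m proj \<psi> + (1 - complex_of_real e) \<cdot>\<^sub>m \<sigma>)
    (complex_of_real e \<cdot>\<^sub>m proj \<phi> + (1 - complex_of_real e) \<cdot>\<^sub>m \<sigma>) = e"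
proof (rule trace_dist_orthogonal_diff[OF _ _ \<psi> \<phi> o e])
  have pc: "\<psi> \<in> carrier_vec N" "\<phi> \<in> carrier_vec N" using \<psi> \<phi> by (auto simp: is_unit_vec_def)
  then show "complex_of_real e \<cdot>\<^sub>m proj \<psi> + (1 - complex_of_real e) \<cdot>\<^sub>m \<sigma> -
      (complex_of_real e \<cdot>\<^sub>m proj \<phi> + (1 - complex_of_real e) \<cdot>\<^sub>m \<sigma>) =
      complex_of_real e \<cdot>\<^sub>m (proj \<psi> - proj \<phi>)"
    using \<sigma> by (intro eq_matI) (auto simp: proj_def algebra_simps)
qed (use \<psi> \<phi> \<sigma> in \<open>auto simp: is_unit_vec_def\<close>)

section \<open>Width of the numerical range\<close>

lemma rayleigh_bounds:
  assumes o: "orthonormal N N u" and w: "w \<in> carrier_vec N" "inner w w = 1" and N: "0 < N"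
  shows "Min (lam ` {..<N}) \<le> Re (inner w (rank1_sum N N u (\<lambda>k. complex_of_real (lam k)) *\<^sub>v w))"
    "Re (inner w (rank1_sum N N u (\<lambda>k. complex_of_real (lam k)) *\<^sub>v w)) \<le> Max (lam ` {..<N})"
proof -
  have uc: "\<And>k. k < N \<Longrightarrow> u k \<in> carrier_vec N" using o by (simp add: orthonormal_def)
  define p where "p k = (cmod (inner (u k) w))\<^sup>2" for k
  have val: "Re (inner w (rank1_sum N N u (\<lambda>k. complex_of_real (lam k)) *\<^sub>v w)) = (\<Sum>k<N. lam k * p k)"
    using inner_rank1_sum[OF uc w(1), where c="\<lambda>k. complex_of_real (lam k)"] by (simp add: Re_sum p_def)
  have "inner w w = inner w (rank1_sum N N u (\<lambda>_. 1) *\<^sub>v w)" using w by (simp add: orthonormal_resolution_identity[OF o])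
  also have "\<dots> = (\<Sum>k<N. 1 * complex_of_real (p k))" unfolding p_def by (rule inner_rank1_sum[OF uc w(1)])
  finally have "(\<Sum>k<N. 1 * complex_of_real (p k)) = 1" using w(2) by simp
  then have "complex_of_real (\<Sum>k<N. p k) = 1" by (simp add: of_real_sum)
  then have ps: "(\<Sum>k<N. p k) = 1" using of_real_eq_1_iff by blast
  have pn: "\<And>k. p k \<ge> 0" by (simp add: p_def)
  have "(\<Sum>k<N. Min (lam ` {..<N}) * p k) \<le> (\<Sum>k<N. lam k * p k)"
    by (rule sum_mono) (use pn in \<open>auto intro!: mult_right_mono\<close>)
  then show "Min (lam ` {..<N}) \<le> Re (inner w (rank1_sum N N u (\<lambda>k. complex_of_real (lam k)) *\<^sub>v w))"
    using ps val by (simp add: sum_distrib_left[symmetric])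
  have "(\<Sum>k<N. lam k * p k) \<le> (\<Sum>k<N. Max (lam ` {..<N}) * p k)"
    by (rule sum_mono) (use pn in \<open>auto intro!: mult_right_mono\<close>)
  then show "Re (inner w (rank1_sum N N u (\<lambda>k. complex_of_real (lam k)) *\<^sub>v w)) \<le> Max (lam ` {..<N})"
    using ps val by (simp add: sum_distrib_left[symmetric])
qed

definition numerical_width :: "nat \<Rightarrow> complex mat \<Rightarrow> real" where
  "numerical_width N A = Sup {Re (inner w (A *\<^sub>v w)) - Re (inner v (A *\<^sub>v v)) | w v.
     is_unit_vec N w \<and> is_unit_vec N v}"

lemma numerical_width_rank1_sum:
  assumes o: "orthonormal N N u" and N: "0 < N"
  shows "numerical_width N (rank1_sum N N u (\<lambda>k. complex_of_real (lam k)))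
    = Max (lam ` {..<N}) - Min (lam ` {..<N})"
proof -
  let ?A = "rank1_sum N N u (\<lambda>k. complex_of_real (lam k))"
  have "Max (lam ` {..<N}) \<in> lam ` {..<N}" using N by (intro Max_in) auto
  then obtain a where a: "a < N" "lam a = Max (lam ` {..<N})" by auto
  have "Min (lam ` {..<N}) \<in> lam ` {..<N}" using N by (intro Min_in) auto
  then obtain b where b: "b < N" "lam b = Min (lam ` {..<N})" by auto
  have unit: "is_unit_vec N (u k)" if "k < N" for k
    using orthonormalD(1)[OF o that] orthonormalD(2)[OF o that that] by (simp add: is_unit_vec_def)
  have q: "Re (inner (u k) (?A *\<^sub>v u k)) = lam k" if "k < N" for k
    using rank1_sum_quadratic_basis[OF o that] by simp
  show ?thesis unfolding numerical_width_def
  proof (rule cSup_eq_maximum)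
    show "Max (lam ` {..<N}) - Min (lam ` {..<N}) \<in> {Re (inner w (?A *\<^sub>v w)) - Re (inner v (?A *\<^sub>v v)) | w v.
      is_unit_vec N w \<and> is_unit_vec N v}"
    proof -
      have "Max (lam ` {..<N}) - Min (lam ` {..<N}) = Re (inner (u a) (?A *\<^sub>v u a)) - Re (inner (u b) (?A *\<^sub>v u b))"
        using q[OF a(1)] q[OF b(1)] a(2) b(2) by simp
      then show ?thesis using unit[OF a(1)] unit[OF b(1)] by blast
    qed
    fix x assume "x \<in> {Re (inner w (?A *\<^sub>v w)) - Re (inner v (?A *\<^sub>v v)) | w v.
      is_unit_vec N w \<and> is_unit_vec N v}"
    then obtain w v where "is_unit_vec N w" "is_unit_vec N v"
      and x: "x = Re (inner w (?A *\<^sub>v w)) - Re (inner v (?A *\<^sub>v v))" by blast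
    then show "x \<le> Max (lam ` {..<N}) - Min (lam ` {..<N})"
      using rayleigh_bounds[OF o, of w lam] rayleigh_bounds[OF o, of v lam] N
      by (auto simp: is_unit_vec_def)
  qed
qed

lemma numerical_width_upper:
  assumes A: "A \<in> carrier_mat N N" "hermitian A" and w: "is_unit_vec N w" and v: "is_unit_vec N v"
  shows "Re (inner w (A *\<^sub>v w)) - Re (inner v (A *\<^sub>v v)) \<le> numerical_width N A"
proof -
  have N: "0 < N" using w by (cases "N = 0") (auto simp: is_unit_vec_def inner_eq_sum)
  obtain u lam where o: "orthonormal N N u" and eq: "A = rank1_sum N N u (\<lambda>k. complex_of_real (lam k))"
    using hermitian_spectral_decomposition[OF A] by auto
  have "Re (inner w (A *\<^sub>v w)) \<le> Max (lam ` {..<N})" "Min (lam ` {..<N}) \<le> Re (inner v (A *\<^sub>v v))"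
    using rayleigh_bounds[OF o _ _ N, of w lam] rayleigh_bounds[OF o _ _ N, of v lam] w v
    unfolding eq is_unit_vec_def by auto
  then show ?thesis unfolding eq numerical_width_rank1_sum[OF o N] by linarith
qed

lemma numerical_width_attained_orthogonal:
  assumes A: "A \<in> carrier_mat N N" "hermitian A" and N: "2 \<le> N"
  shows "\<exists>\<psi> \<phi>. is_unit_vec N \<psi> \<and> is_unit_vec N \<phi> \<and> inner \<psi> \<phi> = 0 \<and>
    Re (inner \<psi> (A *\<^sub>v \<psi>)) - Re (inner \<phi> (A *\<^sub>v \<phi>)) = numerical_width N A"
proof -
  obtain u lam where o: "orthonormal N N u" and eq: "A = rank1_sum N N u (\<lambda>k. complex_of_real (lam k))"
    using hermitian_spectral_decomposition[OF A] by auto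
  have "Max (lam ` {..<N}) \<in> lam ` {..<N}" using N by (intro Max_in) (auto simp: lessThan_empty_iff)
  then obtain a where a: "a < N" "lam a = Max (lam ` {..<N})" by auto
  obtain b where b: "b < N" "b \<noteq> a" "lam b = Min (lam ` {..<N})"
  proof -
    have "Min (lam ` {..<N}) \<in> lam ` {..<N}" using N by (intro Min_in) (auto simp: lessThan_empty_iff)
    then obtain b0 where b0: "b0 < N" "lam b0 = Min (lam ` {..<N})" by auto
    show ?thesis
    proof (cases "b0 = a")
      case True
      \<comment> \<open>then all eigenvalues coincide, and any index other than \<open>a\<close> will do\<close>
      define b where "b = (if a = 0 then 1 else (0::nat))"
      have b: "b < N" "b \<noteq> a" using N by (auto simp: b_def)
      have "Min (lam ` {..<N}) \<le> lam b" "lam b \<le> Max (lam ` {..<N})"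
        using b(1) by (auto intro!: Min_le Max_ge)
      moreover have "lam a = Min (lam ` {..<N})" using True b0 by simp
      ultimately have "lam b = Min (lam ` {..<N})" using a(2) by linarith
      with b show ?thesis using that by blast
    qed (use b0 that in blast)
  qed
  have "Re (inner (u a) (A *\<^sub>v u a)) - Re (inner (u b) (A *\<^sub>v u b)) = numerical_width N A"
    using rank1_sum_quadratic_basis[OF o a(1)] rank1_sum_quadratic_basis[OF o b(1)] a b N
    by (simp add: eq numerical_width_rank1_sum[OF o])
  moreover have "is_unit_vec N (u a)" "is_unit_vec N (u b)" "inner (u a) (u b) = 0"
    using orthonormalD[OF o] a b by (auto simp: is_unit_vec_def)
  ultimately show ?thesis by blast
qed

lemma sum_pos_part_eq_half_sum_abs:
  fixes x :: "'a \<Rightarrow> real"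
  assumes "(\<Sum>i\<in>A. x i) = 0"
  shows "(\<Sum>i\<in>A. max (x i) 0) = (\<Sum>i\<in>A. \<bar>x i\<bar>) / 2"
proof -
  have "(\<Sum>i\<in>A. \<bar>x i\<bar>) = (\<Sum>i\<in>A. 2 * max (x i) 0 - x i)" by (intro sum.cong refl) auto
  also have "\<dots> = 2 * (\<Sum>i\<in>A. max (x i) 0)" using assms by (simp add: sum_subtractf sum_distrib_left)
  finally show ?thesis by simp
qed

lemma sum_mult_le_spread:
  fixes lam q :: "'a \<Rightarrow> real"
  assumes I: "finite I" and lam: "(\<Sum>k\<in>I. lam k) = 0"
    and spread: "\<And>k l. k \<in> I \<Longrightarrow> l \<in> I \<Longrightarrow> q k - q l \<le> d"
  shows "(\<Sum>k\<in>I. lam k * q k) \<le> d * ((\<Sum>k\<in>I. \<bar>lam k\<bar>) / 2)"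
proof (cases "I = {}")
  case False
  define m where "m = Min (q ` I)"
  have "m \<in> q ` I" unfolding m_def using I False by (intro Min_in) auto
  then obtain l where l: "l \<in> I" "q l = m" by auto
  have m: "0 \<le> q k - m" "q k - m \<le> d" if "k \<in> I" for k
    using Min_le[of "q ` I"] I that spread[OF that l(1)] l by (auto simp: m_def)
  \<comment> \<open>shifting \<open>q\<close> by a constant does not change the sum, since the weights sum to zero\<close>
  have "(\<Sum>k\<in>I. lam k * q k) = (\<Sum>k\<in>I. lam k * (q k - m))"
    using lam by (simp add: right_diff_distrib sum_subtractf flip: sum_distrib_right)
  also have "\<dots> \<le> (\<Sum>k\<in>I. max (lam k) 0 * d)"
  proof (rule sum_mono)
    fix k assume k: "k \<in> I"
    show "lam k * (q k - m) \<le> max (lam k) 0 * d"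
      using m[OF k] mult_left_mono[OF m(2)[OF k], of "lam k"] mult_nonpos_nonneg[of "lam k" "q k - m"]
      by (cases "lam k \<ge> 0") (auto simp: max_def)
  qed
  also have "\<dots> = d * ((\<Sum>k\<in>I. \<bar>lam k\<bar>) / 2)"
    using sum_pos_part_eq_half_sum_abs[OF lam] by (simp add: mult.commute flip: sum_distrib_left)
  finally show ?thesis .
qed simp

lemma tv_dist_nonneg: "0 \<le> tv_dist Out p q"
  by (simp add: tv_dist_def sum_nonneg)

lemma tv_dist_eq_sum_positive:
  assumes "finite Out" "(\<Sum>i\<in>Out. p i) = (\<Sum>i\<in>Out. q i)"
  shows "tv_dist Out p q = (\<Sum>i\<in>{i\<in>Out. p i > q i}. p i - q i)"
proof -
  have "(\<Sum>i\<in>Out. p i - q i) = 0" using assms(2) by (simp add: sum_subtractf)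
  have "(\<Sum>i\<in>{i\<in>Out. p i > q i}. p i - q i) = (\<Sum>i\<in>Out. max (p i - q i) 0)"
    using assms(1) by (simp add: sum.inter_filter max_def) (intro sum.cong refl, auto)
  then show ?thesis
    using sum_pos_part_eq_half_sum_abs[OF \<open>(\<Sum>i\<in>Out. p i - q i) = 0\<close>] by (simp add: tv_dist_def)
qed

lemma sum_diff_le_tv_dist:
  assumes "finite Out" "(\<Sum>i\<in>Out. p i) = (\<Sum>i\<in>Out. q i)" and S: "S \<subseteq> Out"
  shows "(\<Sum>i\<in>S. p i - q i) \<le> tv_dist Out p q"
proof -
  have "(\<Sum>i\<in>Out. p i - q i) = 0" using assms(2) by (simp add: sum_subtractf)
  have "(\<Sum>i\<in>S. p i - q i) \<le> (\<Sum>i\<in>S. max (p i - q i) 0)" by (rule sum_mono) simp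
  also have "\<dots> \<le> (\<Sum>i\<in>Out. max (p i - q i) 0)" by (rule sum_mono2[OF assms(1) S]) simp
  also have "\<dots> = tv_dist Out p q"
    using sum_pos_part_eq_half_sum_abs[OF \<open>(\<Sum>i\<in>Out. p i - q i) = 0\<close>] by (simp add: tv_dist_def)
  finally show ?thesis .
qed

lemma re_mtrace_mult_diff_le:
  assumes Q: "Q \<in> carrier_mat N N" "hermitian Q" and \<rho>: "density N \<rho>" and \<sigma>: "density N \<sigma>"
  shows "Re (mtrace (Q * \<rho>)) - Re (mtrace (Q * \<sigma>)) \<le> numerical_width N Q * trace_dist N \<rho> \<sigma>"
proof -
  have c: "\<rho> \<in> carrier_mat N N" "\<sigma> \<in> carrier_mat N N" "hermitian \<rho>" "hermitian \<sigma>"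
    and tr: "mtrace \<rho> = 1" "mtrace \<sigma> = 1"
    using \<rho> \<sigma> by (auto simp: density_def psd_def)
  obtain u lam where o: "orthonormal N N u" and eq: "\<rho> - \<sigma> = rank1_sum N N u (\<lambda>k. complex_of_real (lam k))"
    using hermitian_spectral_decomposition[OF _ hermitian_diff[OF c]] minus_carrier_mat[OF c(2)] c(1) by blast
  have "complex_of_real (\<Sum>k<N. lam k) = mtrace (\<rho> - \<sigma>)"
    by (simp add: eq mtrace_rank1_sum[OF o])
  then have lam: "(\<Sum>k<N. lam k) = 0" using tr c by (simp add: mtrace_minus del: of_real_sum)
  have "Re (mtrace (Q * \<rho>)) - Re (mtrace (Q * \<sigma>)) = Re (mtrace (Q * (\<rho> - \<sigma>)))"
    using Q c by (simp add: mult_minus_distrib_mat[of _ N N] mtrace_minus[of _ N])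
  also have "\<dots> = (\<Sum>k<N. lam k * Re (inner (u k) (Q *\<^sub>v u k)))"
    using mtrace_mult_rank1_sum[OF Q(1) orthonormalD(1)[OF o]] by (simp add: eq Re_sum)
  also have "\<dots> \<le> numerical_width N Q * ((\<Sum>k<N. \<bar>lam k\<bar>) / 2)"
    by (rule sum_mult_le_spread[OF _ lam numerical_width_upper[OF Q]])
      (use orthonormalD[OF o] in \<open>auto simp: is_unit_vec_def\<close>)
  also have "\<dots> = numerical_width N Q * trace_dist N \<rho> \<sigma>"
    using trace_dist_rank1_sum[OF c(1,2) o eq] by simp
  finally show ?thesis .
qed

section \<open>Outcome probabilities of a decision model\<close>

definition povm_effect :: "nat \<Rightarrow> 'j set \<Rightarrow> ('j \<Rightarrow> complex mat) \<Rightarrow> ('o \<Rightarrow> complex mat) \<Rightarrow> 'o \<Rightarrow> complex mat" where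
  "povm_effect N J E M i = msum N J (\<lambda>j. adj (M i * E j) * (M i * E j))"

definition event_effect :: "nat \<Rightarrow> 'j set \<Rightarrow> ('j \<Rightarrow> complex mat) \<Rightarrow> ('o \<Rightarrow> complex mat) \<Rightarrow> 'o set \<Rightarrow> complex mat" where
  "event_effect N J E M S = msum N S (povm_effect N J E M)"

lemma povm_effect_carrier[simp]: "povm_effect N J E M i \<in> carrier_mat N N"
  by (simp add: povm_effect_def)

lemma event_effect_carrier[simp]: "event_effect N J E M S \<in> carrier_mat N N"
  by (simp add: event_effect_def)

locale decision_model =
  fixes N :: nat and J :: "'j set" and E :: "'j \<Rightarrow> complex mat" and Out :: "'o set" and M :: "'o \<Rightarrow> complex mat"
  assumes q: "qdm N J E Out M"
begin

lemma qdmD: "finite J" "\<And>j. j \<in> J \<Longrightarrow> E j \<in> carrier_mat N N" "msum N J (\<lambda>j. adj (E j) * E j) = 1\<^sub>m N"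
  "finite Out" "\<And>i. i \<in> Out \<Longrightarrow> M i \<in> carrier_mat N N" "msum N Out (\<lambda>i. adj (M i) * M i) = 1\<^sub>m N"
  using q by (auto simp: qdm_def)

lemma hermitian_povm_effect:
  assumes i: "i \<in> Out"
  shows "hermitian (povm_effect N J E M i)"
proof -
  have c: "\<And>j. j \<in> J \<Longrightarrow> M i * E j \<in> carrier_mat N N" using qdmD(2,5) i by simp
  have "adj (povm_effect N J E M i) = msum N J (\<lambda>j. adj (adj (M i * E j) * (M i * E j)))"
    unfolding povm_effect_def by (rule adj_msum) (use c in auto)
  also have "\<dots> = povm_effect N J E M i" unfolding povm_effect_def
    by (rule msum_cong) (simp add: adj_mult[OF adj_carrier[OF c] c] adj_adj)
  finally show ?thesis by (simp add: hermitian_def)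
qed

lemma qdm_out_trace:
  assumes i: "i \<in> Out" and r: "\<rho> \<in> carrier_mat N N"
  shows "qdm_out N J E M \<rho> i = Re (mtrace (povm_effect N J E M i * \<rho>))"
proof -
  have Mi: "M i \<in> carrier_mat N N" using qdmD(5) i .
  have Ej: "\<And>j. j \<in> J \<Longrightarrow> E j \<in> carrier_mat N N" by (rule qdmD(2))
  have "M i * superop N J E \<rho> * adj (M i) = msum N J (\<lambda>j. M i * (E j * \<rho> * adj (E j)) * adj (M i))"
  proof -
    have "M i * superop N J E \<rho> = msum N J (\<lambda>j. M i * (E j * \<rho> * adj (E j)))"
      unfolding superop_def by (rule msum_mult_left[OF Mi _ qdmD(1)]) (use Ej r in simp)
    then show ?thesis
      by (simp add: msum_mult_right[OF adj_carrier[OF Mi] _ qdmD(1)] Ej r Mi)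
  qed
  then have "mtrace (M i * superop N J E \<rho> * adj (M i)) = (\<Sum>j\<in>J. mtrace (M i * (E j * \<rho> * adj (E j)) * adj (M i)))"
    using mtrace_msum[of J "\<lambda>j. M i * (E j * \<rho> * adj (E j)) * adj (M i)" N] Ej r Mi by simp
  also have "\<dots> = (\<Sum>j\<in>J. mtrace (adj (M i * E j) * (M i * E j) * \<rho>))"
  proof (intro sum.cong refl)
    fix j assume j: "j \<in> J"
    note c = Ej[OF j] Mi r
    define G where "G = M i * E j"
    have G: "G \<in> carrier_mat N N" using c by (simp add: G_def)
    have "M i * (E j * \<rho> * adj (E j)) * adj (M i) = (G * \<rho>) * adj G"
      using c by (simp add: G_def adj_mult[of _ N N _ N] assoc_mult_mat[of _ N N _ N _ N])
    then have "mtrace (M i * (E j * \<rho> * adj (E j)) * adj (M i)) = mtrace (adj G * (G * \<rho>))"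
      using mtrace_comm[of "G * \<rho>" N "adj G"] G c by simp
    also have "\<dots> = mtrace (adj (M i * E j) * (M i * E j) * \<rho>)"
      using G c by (simp add: G_def assoc_mult_mat[of _ N N _ N _ N])
    finally show "mtrace (M i * (E j * \<rho> * adj (E j)) * adj (M i)) = mtrace (adj (M i * E j) * (M i * E j) * \<rho>)" .
  qed
  also have "\<dots> = mtrace (msum N J (\<lambda>j. adj (M i * E j) * (M i * E j) * \<rho>))"
    by (rule mtrace_msum[symmetric]) (use Ej r Mi in auto)
  also have "\<dots> = mtrace (povm_effect N J E M i * \<rho>)"
    unfolding povm_effect_def by (subst msum_mult_right[OF r _ qdmD(1)]) (use Ej Mi in auto)
  finally show ?thesis by (simp add: qdm_out_def)
qed

lemma msum_povm_effect: "msum N Out (povm_effect N J E M) = 1\<^sub>m N"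
proof -
  have Ej: "\<And>j. j \<in> J \<Longrightarrow> E j \<in> carrier_mat N N" by (rule qdmD(2))
  have Mi: "\<And>i. i \<in> Out \<Longrightarrow> M i \<in> carrier_mat N N" by (rule qdmD(5))
  have "msum N Out (povm_effect N J E M) = msum N J (\<lambda>j. msum N Out (\<lambda>i. adj (M i * E j) * (M i * E j)))"
    unfolding povm_effect_def by (rule msum_swap)
  also have "\<dots> = msum N J (\<lambda>j. adj (E j) * msum N Out (\<lambda>i. adj (M i) * M i) * E j)"
  proof (rule msum_cong)
    fix j assume j: "j \<in> J"
    have "msum N Out (\<lambda>i. adj (M i * E j) * (M i * E j)) = msum N Out (\<lambda>i. adj (E j) * (adj (M i) * M i) * E j)"
      by (rule msum_cong) (use Ej[OF j] Mi in \<open>simp add: adj_mult[of _ N N _ N] assoc_mult_mat[of _ N N _ N _ N]\<close>)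
    also have "\<dots> = adj (E j) * msum N Out (\<lambda>i. adj (M i) * M i) * E j"
      using Ej[OF j] Mi qdmD(4)
      by (simp add: msum_mult_left[of _ N] msum_mult_right[of _ N])
    finally show "msum N Out (\<lambda>i. adj (M i * E j) * (M i * E j)) = adj (E j) * msum N Out (\<lambda>i. adj (M i) * M i) * E j" .
  qed
  also have "\<dots> = msum N J (\<lambda>j. adj (E j) * E j)"
  proof (rule msum_cong)
    fix j assume j: "j \<in> J"
    have "adj (E j) \<in> carrier_mat N N" using Ej[OF j] by simp
    then show "adj (E j) * msum N Out (\<lambda>i. adj (M i) * M i) * E j = adj (E j) * E j"
      by (simp add: qdmD(6) right_mult_one_mat[of _ N N])
  qed
  also have "\<dots> = 1\<^sub>m N" by (rule qdmD(3))
  finally show ?thesis .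
qed

lemma hermitian_event_effect:
  assumes "S \<subseteq> Out"
  shows "hermitian (event_effect N J E M S)"
proof -
  have "adj (event_effect N J E M S) = msum N S (\<lambda>i. adj (povm_effect N J E M i))"
    unfolding event_effect_def by (rule adj_msum) simp
  also have "\<dots> = event_effect N J E M S" unfolding event_effect_def
    by (rule msum_cong) (use hermitian_povm_effect assms in \<open>auto simp: hermitian_def\<close>)
  finally show ?thesis by (simp add: hermitian_def)
qed

lemma sum_qdm_out_eq_event_effect:
  assumes S: "S \<subseteq> Out" and \<rho>: "\<rho> \<in> carrier_mat N N"
  shows "(\<Sum>i\<in>S. qdm_out N J E M \<rho> i) = Re (mtrace (event_effect N J E M S * \<rho>))"
proof -
  have S_fin: "finite S" using S qdmD(4) by (rule finite_subset)
  have "(\<Sum>i\<in>S. qdm_out N J E M \<rho> i) = Re (\<Sum>i\<in>S. mtrace (povm_effect N J E M i * \<rho>))"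
    using S by (simp add: qdm_out_trace[OF _ \<rho>] Re_sum subset_iff)
  also have "(\<Sum>i\<in>S. mtrace (povm_effect N J E M i * \<rho>)) = mtrace (msum N S (\<lambda>i. povm_effect N J E M i * \<rho>))"
    by (rule mtrace_msum[symmetric]) (use \<rho> in simp)
  also have "msum N S (\<lambda>i. povm_effect N J E M i * \<rho>) = event_effect N J E M S * \<rho>"
    unfolding event_effect_def by (rule msum_mult_right[OF \<rho> _ S_fin, symmetric]) simp
  finally show ?thesis .
qed

lemma sum_qdm_out_density:
  assumes "density N \<rho>"
  shows "(\<Sum>i\<in>Out. qdm_out N J E M \<rho> i) = 1"
proof -
  have "\<rho> \<in> carrier_mat N N" "mtrace \<rho> = 1" using assms by (auto simp: density_def psd_def)
  then show ?thesis using sum_qdm_out_eq_event_effect[of Out \<rho>]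
    by (simp add: event_effect_def msum_povm_effect)
qed

lemma qdm_out_mixture:
  assumes X: "X \<in> carrier_mat N N" and Y: "Y \<in> carrier_mat N N" and i: "i \<in> Out"
  shows "qdm_out N J E M (complex_of_real e \<cdot>\<^sub>m X + (1 - complex_of_real e) \<cdot>\<^sub>m Y) i
    = e * qdm_out N J E M X i + (1 - e) * qdm_out N J E M Y i"
proof -
  let ?P = "povm_effect N J E M i"
  have P: "?P \<in> carrier_mat N N" by simp
  have Z: "complex_of_real e \<cdot>\<^sub>m X + (1 - complex_of_real e) \<cdot>\<^sub>m Y \<in> carrier_mat N N" using X Y by simp
  have "mtrace (?P * (complex_of_real e \<cdot>\<^sub>m X + (1 - complex_of_real e) \<cdot>\<^sub>m Y))
     = complex_of_real e * mtrace (?P * X) + (1 - complex_of_real e) * mtrace (?P * Y)"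
    using X Y by (simp add: mtrace_mult_eq_sum[OF P Z] mtrace_mult_eq_sum[OF P X] mtrace_mult_eq_sum[OF P Y]
        distrib_left sum.distrib sum_distrib_left mult_ac)
  then show ?thesis using qdm_out_trace[OF i Z] qdm_out_trace[OF i X] qdm_out_trace[OF i Y] by simp
qed

lemma tv_dist_qdm_out_mixture:
  assumes X: "X \<in> carrier_mat N N" and Y: "Y \<in> carrier_mat N N" and \<sigma>: "\<sigma> \<in> carrier_mat N N" and e: "0 \<le> e"
  shows "tv_dist Out (qdm_out N J E M (complex_of_real e \<cdot>\<^sub>m X + (1 - complex_of_real e) \<cdot>\<^sub>m \<sigma>))
      (qdm_out N J E M (complex_of_real e \<cdot>\<^sub>m Y + (1 - complex_of_real e) \<cdot>\<^sub>m \<sigma>))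
    = e * tv_dist Out (qdm_out N J E M X) (qdm_out N J E M Y)"
proof -
  have "\<bar>qdm_out N J E M (complex_of_real e \<cdot>\<^sub>m X + (1 - complex_of_real e) \<cdot>\<^sub>m \<sigma>) i
      - qdm_out N J E M (complex_of_real e \<cdot>\<^sub>m Y + (1 - complex_of_real e) \<cdot>\<^sub>m \<sigma>) i\<bar>
    = e * \<bar>qdm_out N J E M X i - qdm_out N J E M Y i\<bar>" if i: "i \<in> Out" for i
  proof -
    have "qdm_out N J E M (complex_of_real e \<cdot>\<^sub>m X + (1 - complex_of_real e) \<cdot>\<^sub>m \<sigma>) i
      - qdm_out N J E M (complex_of_real e \<cdot>\<^sub>m Y + (1 - complex_of_real e) \<cdot>\<^sub>m \<sigma>) i
      = e * (qdm_out N J E M X i - qdm_out N J E M Y i)"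
      by (simp add: qdm_out_mixture[OF X \<sigma> i] qdm_out_mixture[OF Y \<sigma> i] algebra_simps)
    then show ?thesis using e by (simp add: abs_mult)
  qed
  then show ?thesis unfolding tv_dist_def by (simp add: sum_distrib_left)
qed

lemma bias_pair_mixture:
  assumes \<psi>: "is_unit_vec N \<psi>" and \<phi>: "is_unit_vec N \<phi>" and o: "inner \<psi> \<phi> = 0"
    and \<sigma>: "density N \<sigma>" and e: "0 < e" "e \<le> 1"
    and gap: "\<delta> < e * tv_dist Out (qdm_out N J E M (proj \<psi>)) (qdm_out N J E M (proj \<phi>))"
  shows "bias_pair N J E Out M e \<delta> (complex_of_real e \<cdot>\<^sub>m proj \<psi> + (1 - complex_of_real e) \<cdot>\<^sub>m \<sigma>)
    (complex_of_real e \<cdot>\<^sub>m proj \<phi> + (1 - complex_of_real e) \<cdot>\<^sub>m \<sigma>)"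
proof -
  have c: "\<psi> \<in> carrier_vec N" "\<phi> \<in> carrier_vec N" "\<sigma> \<in> carrier_mat N N"
    using \<psi> \<phi> \<sigma> by (auto simp: is_unit_vec_def density_def psd_def)
  show ?thesis
    unfolding bias_pair_def
    using density_convex_comb[OF density_proj[OF \<psi>] \<sigma>] density_convex_comb[OF density_proj[OF \<phi>] \<sigma>] e gap
      trace_dist_mixture[OF \<psi> \<phi> o c(3)] tv_dist_qdm_out_mixture[OF proj_carrier[OF c(1)] proj_carrier[OF c(2)] c(3)]
    by simp
qed

end

section \<open>The Lipschitz constant and fairness\<close>

lemma lipschitz_const_eqI:
  assumes bound: "\<And>\<rho> \<sigma>. density N \<rho> \<Longrightarrow> density N \<sigma> \<Longrightarrow>
      tv_dist Out (qdm_out N J E M \<rho>) (qdm_out N J E M \<sigma>) \<le> K * trace_dist N \<rho> \<sigma>"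
    and \<psi>: "is_unit_vec N \<psi>" and \<phi>: "is_unit_vec N \<phi>" and o: "inner \<psi> \<phi> = 0"
    and attained: "tv_dist Out (qdm_out N J E M (proj \<psi>)) (qdm_out N J E M (proj \<phi>)) = K"
  shows "lipschitz_const N J E Out M = K"
  unfolding lipschitz_const_def
proof (rule Least_equality)
  show "0 \<le> K \<and> (\<forall>\<rho> \<sigma>. density N \<rho> \<longrightarrow> density N \<sigma> \<longrightarrow>
      tv_dist Out (qdm_out N J E M \<rho>) (qdm_out N J E M \<sigma>) \<le> K * trace_dist N \<rho> \<sigma>)"
    using bound tv_dist_nonneg attained by metis
  fix K' assume "0 \<le> K' \<and> (\<forall>\<rho> \<sigma>. density N \<rho> \<longrightarrow> density N \<sigma> \<longrightarrow>
      tv_dist Out (qdm_out N J E M \<rho>) (qdm_out N J E M \<sigma>) \<le> K' * trace_dist N \<rho> \<sigma>)"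
  then have "tv_dist Out (qdm_out N J E M (proj \<psi>)) (qdm_out N J E M (proj \<phi>))
      \<le> K' * trace_dist N (proj \<psi>) (proj \<phi>)"
    using density_proj[OF \<psi>] density_proj[OF \<phi>] by blast
  then show "K \<le> K'" using attained trace_dist_proj_orthogonal[OF \<psi> \<phi> o] by simp
qed

lemma lipschitz_const_dim_less_2:
  assumes "N < 2"
  shows "lipschitz_const N J E Out M = 0"
  unfolding lipschitz_const_def
proof (rule Least_equality)
  have "tv_dist Out (qdm_out N J E M \<rho>) (qdm_out N J E M \<sigma>) = 0"
    if "density N \<rho>" "density N \<sigma>" for \<rho> \<sigma>
    using density_eq_if_dim_less_2[OF assms that] by (simp add: tv_dist_def)
  then show "0 \<le> (0::real) \<and> (\<forall>\<rho> \<sigma>. density N \<rho> \<longrightarrow> density N \<sigma> \<longrightarrow>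
      tv_dist Out (qdm_out N J E M \<rho>) (qdm_out N J E M \<sigma>) \<le> 0 * trace_dist N \<rho> \<sigma>)"
    by simp
qed simp

definition max_event_width :: "nat \<Rightarrow> 'j set \<Rightarrow> ('j \<Rightarrow> complex mat) \<Rightarrow> 'o set \<Rightarrow> ('o \<Rightarrow> complex mat) \<Rightarrow> real" where
  "max_event_width N J E Out M = Max ((\<lambda>S. numerical_width N (event_effect N J E M S)) ` Pow Out)"

context decision_model
begin

lemma tv_dist_qdm_out_le:
  assumes \<rho>: "density N \<rho>" and \<sigma>: "density N \<sigma>"
  shows "tv_dist Out (qdm_out N J E M \<rho>) (qdm_out N J E M \<sigma>) \<le> max_event_width N J E Out M * trace_dist N \<rho> \<sigma>"
proof -
  have c: "\<rho> \<in> carrier_mat N N" "\<sigma> \<in> carrier_mat N N" using \<rho> \<sigma> by (auto simp: density_def psd_def)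
  define T where "T = {i \<in> Out. qdm_out N J E M \<rho> i > qdm_out N J E M \<sigma> i}"
  have T: "T \<subseteq> Out" by (auto simp: T_def)
  let ?Q = "event_effect N J E M T"
  have "tv_dist Out (qdm_out N J E M \<rho>) (qdm_out N J E M \<sigma>) = (\<Sum>i\<in>T. qdm_out N J E M \<rho> i - qdm_out N J E M \<sigma> i)"
    unfolding T_def by (rule tv_dist_eq_sum_positive[OF qdmD(4)]) (simp add: sum_qdm_out_density \<rho> \<sigma>)
  also have "\<dots> = Re (mtrace (?Q * \<rho>)) - Re (mtrace (?Q * \<sigma>))"
    by (simp add: sum_subtractf sum_qdm_out_eq_event_effect[OF T] c)
  also have "\<dots> \<le> numerical_width N ?Q * trace_dist N \<rho> \<sigma>"
    by (rule re_mtrace_mult_diff_le[OF _ hermitian_event_effect[OF T] \<rho> \<sigma>]) simp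
  also have "\<dots> \<le> max_event_width N J E Out M * trace_dist N \<rho> \<sigma>"
    unfolding max_event_width_def using T qdmD(4) trace_dist_nonneg[OF \<rho> \<sigma>]
    by (intro mult_right_mono Max_ge) auto
  finally show ?thesis .
qed

lemma max_event_width_attained:
  assumes N: "2 \<le> N"
  shows "\<exists>\<psi> \<phi>. is_unit_vec N \<psi> \<and> is_unit_vec N \<phi> \<and> inner \<psi> \<phi> = 0 \<and>
    tv_dist Out (qdm_out N J E M (proj \<psi>)) (qdm_out N J E M (proj \<phi>)) = max_event_width N J E Out M"
proof -
  have "max_event_width N J E Out M \<in> (\<lambda>S. numerical_width N (event_effect N J E M S)) ` Pow Out"
    unfolding max_event_width_def using qdmD(4) by (intro Max_in) auto
  then obtain S where S: "S \<subseteq> Out" and width: "numerical_width N (event_effect N J E M S) = max_event_width N J E Out M"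
    by auto
  obtain \<psi> \<phi> where \<psi>: "is_unit_vec N \<psi>" and \<phi>: "is_unit_vec N \<phi>" and o: "inner \<psi> \<phi> = 0"
    and diff: "Re (inner \<psi> (event_effect N J E M S *\<^sub>v \<psi>)) - Re (inner \<phi> (event_effect N J E M S *\<^sub>v \<phi>))
      = numerical_width N (event_effect N J E M S)"
    using numerical_width_attained_orthogonal[OF _ hermitian_event_effect[OF S] N] by auto
  have c: "\<psi> \<in> carrier_vec N" "\<phi> \<in> carrier_vec N" using \<psi> \<phi> by (auto simp: is_unit_vec_def)
  let ?tv = "tv_dist Out (qdm_out N J E M (proj \<psi>)) (qdm_out N J E M (proj \<phi>))"
  have "max_event_width N J E Out M = (\<Sum>i\<in>S. qdm_out N J E M (proj \<psi>) i - qdm_out N J E M (proj \<phi>) i)"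
    using diff width c
    by (simp add: sum_subtractf sum_qdm_out_eq_event_effect[OF S] mtrace_mult_proj[OF event_effect_carrier])
  also have "\<dots> \<le> ?tv"
    using density_proj[OF \<psi>] density_proj[OF \<phi>]
    by (intro sum_diff_le_tv_dist[OF qdmD(4) _ S]) (simp add: sum_qdm_out_density)
  finally have "max_event_width N J E Out M \<le> ?tv" .
  moreover have "?tv \<le> max_event_width N J E Out M"
    using tv_dist_qdm_out_le[OF density_proj[OF \<psi>] density_proj[OF \<phi>]] trace_dist_proj_orthogonal[OF \<psi> \<phi> o]
    by simp
  ultimately have "?tv = max_event_width N J E Out M" by linarith
  with \<psi> \<phi> o show ?thesis by (intro exI[of _ \<psi>] exI[of _ \<phi>]) simp
qed

lemma lipschitz_const_eq_max_event_width:
  assumes "2 \<le> N"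
  shows "lipschitz_const N J E Out M = max_event_width N J E Out M"
proof -
  obtain \<psi> \<phi> where "is_unit_vec N \<psi>" "is_unit_vec N \<phi>" "inner \<psi> \<phi> = 0"
    "tv_dist Out (qdm_out N J E M (proj \<psi>)) (qdm_out N J E M (proj \<phi>)) = max_event_width N J E Out M"
    using max_event_width_attained[OF assms] by blast
  then show ?thesis using lipschitz_const_eqI[OF tv_dist_qdm_out_le] by metis
qed

lemma lipschitz_const_bound:
  assumes "density N \<rho>" "density N \<sigma>"
  shows "tv_dist Out (qdm_out N J E M \<rho>) (qdm_out N J E M \<sigma>) \<le> lipschitz_const N J E Out M * trace_dist N \<rho> \<sigma>"
proof (cases "N < 2")
  case True
  then show ?thesis
    using assms by (simp add: lipschitz_const_dim_less_2 density_eq_if_dim_less_2[of N \<rho> \<sigma>] tv_dist_def)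
qed (simp add: lipschitz_const_eq_max_event_width tv_dist_qdm_out_le assms)

lemma lipschitz_const_attained:
  assumes "0 < lipschitz_const N J E Out M"
  shows "\<exists>\<psi> \<phi>. is_unit_vec N \<psi> \<and> is_unit_vec N \<phi> \<and> inner \<psi> \<phi> = 0 \<and>
    tv_dist Out (qdm_out N J E M (proj \<psi>)) (qdm_out N J E M (proj \<phi>)) = lipschitz_const N J E Out M"
proof -
  have "2 \<le> N" using assms lipschitz_const_dim_less_2[of N J E Out M] by (metis not_le order_less_irrefl)
  then show ?thesis using max_event_width_attained lipschitz_const_eq_max_event_width by simp
qed

lemma lipschitz_const_nonneg: "0 \<le> lipschitz_const N J E Out M"
proof (cases "N < 2")
  case False
  then have "2 \<le> N" by simp
  then show ?thesis
    using max_event_width_attained lipschitz_const_eq_max_event_width tv_dist_nonneg by metis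
qed (simp add: lipschitz_const_dim_less_2)

lemma not_fair_iff:
  assumes \<epsilon>: "0 < \<epsilon>" "\<epsilon> \<le> 1" and \<delta>: "0 < \<delta>"
  shows "\<not> fair N J E Out M \<epsilon> \<delta> \<longleftrightarrow> \<delta> < lipschitz_const N J E Out M * \<epsilon>"
proof
  assume "\<not> fair N J E Out M \<epsilon> \<delta>"
  then obtain \<rho> \<sigma> where d: "density N \<rho>" "density N \<sigma>" and D: "trace_dist N \<rho> \<sigma> \<le> \<epsilon>"
    and tv: "\<delta> < tv_dist Out (qdm_out N J E M \<rho>) (qdm_out N J E M \<sigma>)"
    unfolding fair_def bias_pair_def by blast
  have "tv_dist Out (qdm_out N J E M \<rho>) (qdm_out N J E M \<sigma>) \<le> lipschitz_const N J E Out M * trace_dist N \<rho> \<sigma>"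
    by (rule lipschitz_const_bound[OF d])
  also have "\<dots> \<le> lipschitz_const N J E Out M * \<epsilon>" by (rule mult_left_mono[OF D lipschitz_const_nonneg])
  finally show "\<delta> < lipschitz_const N J E Out M * \<epsilon>" using tv by linarith
next
  assume lt: "\<delta> < lipschitz_const N J E Out M * \<epsilon>"
  then have "0 < lipschitz_const N J E Out M"
    using \<delta> lipschitz_const_nonneg by (cases "lipschitz_const N J E Out M = 0") auto
  then obtain \<psi> \<phi> where "is_unit_vec N \<psi>" "is_unit_vec N \<phi>" "inner \<psi> \<phi> = 0"
    and "tv_dist Out (qdm_out N J E M (proj \<psi>)) (qdm_out N J E M (proj \<phi>)) = lipschitz_const N J E Out M"
    using lipschitz_const_attained by blast
  with lt show "\<not> fair N J E Out M \<epsilon> \<delta>"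
    unfolding fair_def using bias_pair_mixture[OF _ _ _ density_proj \<epsilon>] by (metis mult.commute)
qed

end

theorem theorem1:
  fixes N :: nat and J :: "'j set" and E :: "'j \<Rightarrow> complex mat"
    and Out :: "'o set" and M :: "'o \<Rightarrow> complex mat" and \<epsilon> \<delta> :: real
  assumes "qdm N J E Out M"
    and "0 < \<epsilon>" "\<epsilon> \<le> 1" "0 < \<delta>" "\<delta> \<le> 1"
  shows "(fair N J E Out M \<epsilon> \<delta> \<longleftrightarrow> \<delta> \<ge> lipschitz_const N J E Out M * \<epsilon>)
    \<and> (\<not> fair N J E Out M \<epsilon> \<delta> \<longrightarrow>
         (\<exists>\<psi> \<phi>. is_unit_vec N \<psi> \<and> is_unit_vec N \<phi> \<and> inner \<psi> \<phi> = 0 \<and>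
            tv_dist Out (qdm_out N J E M (proj \<psi>)) (qdm_out N J E M (proj \<phi>))
              = lipschitz_const N J E Out M * trace_dist N (proj \<psi>) (proj \<phi>))
       \<and> (\<forall>\<psi> \<phi> \<sigma>. is_unit_vec N \<psi> \<longrightarrow> is_unit_vec N \<phi> \<longrightarrow> inner \<psi> \<phi> = 0 \<longrightarrow>
            tv_dist Out (qdm_out N J E M (proj \<psi>)) (qdm_out N J E M (proj \<phi>))
              = lipschitz_const N J E Out M * trace_dist N (proj \<psi>) (proj \<phi>) \<longrightarrow>
            density N \<sigma> \<longrightarrow>
            bias_pair N J E Out M \<epsilon> \<delta>
              (\<epsilon> \<cdot>\<^sub>m proj \<psi> + (1 - \<epsilon>) \<cdot>\<^sub>m \<sigma>)
              (\<epsilon> \<cdot>\<^sub>m proj \<phi> + (1 - \<epsilon>) \<cdot>\<^sub>m \<sigma>)))"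
proof -
  interpret decision_model N J E Out M by unfold_locales (rule assms(1))
  let ?K = "lipschitz_const N J E Out M"
  have unfair: "\<not> fair N J E Out M \<epsilon> \<delta> \<longleftrightarrow> \<delta> < ?K * \<epsilon>" by (rule not_fair_iff[OF assms(2-4)])
  show ?thesis
  proof (intro conjI impI allI)
    show "fair N J E Out M \<epsilon> \<delta> \<longleftrightarrow> ?K * \<epsilon> \<le> \<delta>" using unfair by auto
    assume "\<not> fair N J E Out M \<epsilon> \<delta>"
    with unfair have lt: "\<delta> < ?K * \<epsilon>" by blast
    then have "0 < ?K" using assms(4) lipschitz_const_nonneg by (cases "?K = 0") auto
    then show "\<exists>\<psi> \<phi>. is_unit_vec N \<psi> \<and> is_unit_vec N \<phi> \<and> inner \<psi> \<phi> = 0 \<and>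
        tv_dist Out (qdm_out N J E M (proj \<psi>)) (qdm_out N J E M (proj \<phi>)) = ?K * trace_dist N (proj \<psi>) (proj \<phi>)"
      using lipschitz_const_attained trace_dist_proj_orthogonal by fastforce
    fix \<psi> \<phi> \<sigma>
    assume "is_unit_vec N \<psi>" "is_unit_vec N \<phi>" "inner \<psi> \<phi> = 0" "density N \<sigma>"
      and "tv_dist Out (qdm_out N J E M (proj \<psi>)) (qdm_out N J E M (proj \<phi>)) = ?K * trace_dist N (proj \<psi>) (proj \<phi>)"
    with lt show "bias_pair N J E Out M \<epsilon> \<delta> (\<epsilon> \<cdot>\<^sub>m proj \<psi> + (1 - \<epsilon>) \<cdot>\<^sub>m \<sigma>) (\<epsilon> \<cdot>\<^sub>m proj \<phi> + (1 - \<epsilon>) \<cdot>\<^sub>m \<sigma>)"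
      using bias_pair_mixture[OF _ _ _ _ assms(2,3)] trace_dist_proj_orthogonal by (simp add: mult.commute)
  qed
qed

end
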